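(* Let $K,d,S,N$ be positive integers with $S+2\le N\le d(K-1)+S$, let $C\triangleq d(K-1)+S+1-N$, let $\boldsymbol{\mathcal{N}}=\{\mathcal{N}_g:g\in[G]\}$ be a pre-specified non-straggler pattern with intersection $\mathcal{I}=\bigcap_{g\in[G]}\mathcal{N}_g$, $I=|\mathcal{I}|$, and $L\triangleq N-S-I$. Let $\boldsymbol{w}\in\mathbb{C}^K$ with all $w_k\neq0$. Define $$I^*=\begin{cases}\lfloor (K-1)/2\rfloor+1, & d=1,\\ (d-1)(K-1)+1, & d\ge 2.\end{cases}$$ Then for a fixed generic pairwise distinct set of data points $\{\alpha_k\in\mathbb{C}:k\in[K]\}$ (i.e. chosen outside a proper algebraic variety of $\mathbb{C}^K$ determined by $K,N,d,S,\boldsymbol{w}$): (1) There exist pairwise distinct values $\{\beta_n:n\in\mathcal{I}\}\subseteq\mathbb{C}$ with $\{\beta_n:n\in\mathcal{I}\}\cap\{\alpha_k:k\in[K]\}=\emptyset$ such that $$\sum_{k=0}^{K-1}w_k\,P_{\mathcal{I}}(\alpha_k)\,\alpha_k^j=0\ \text{ for all } j\in[C+L],\qquad P_{\mathcal{I}}(z)\triangleq\prod_{n\in\mathcal{I}}(z-\beta_n),$$ if and only if $I\ge I^*$. (2) If $I\ge I^*$, then there exist pairwise distinct evaluation points $\{\beta_n:n\in[N]\}$ with $\{\alpha_k:k\in[K]\}\cap\{\beta_n:n\in[N]\}=\emptyset$ such that $\sum_{k=0}^{K-1}w_kP_g(\alpha_k)\alpha_k^j=0$ for all $j\in[C]$,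 $g\in[G]$, where $P_g(z)\triangleq\prod_{n\in\mathcal{N}_g}(z-\beta_n)$; hence the CPA scheme with these points is feasible over $\boldsymbol{\mathcal{N}}$.
   Context: Notation: for a positive integer $m$, $[m]=\{0,1,\dots,m-1\}$. A master and $N$ workers indexed by $[N]$. Given $K$ data matrices $\boldsymbol{X}_k\in\mathbb{C}^{q\times v}$, a polynomial $F$ of degree $d$ acting entry-wise, and weights $w_k\neq0$, the goal is $\boldsymbol{Y}=\sum_{k=0}^{K-1}w_kF(\boldsymbol{X}_k)$. A non-straggler pattern is a collection $\boldsymbol{\mathcal{N}}=\{\mathcal{N}_g:g\in[G]\}$ of subsets of $[N]$ each of cardinality $N-S$. A CPA scheme: the master uses pairwise distinct data points $\alpha_k$ and the encoder polynomial $E(z)$ of degree at most $K-1$ with $E(\alpha_k)=\boldsymbol{X}_k$, pairwise distinct evaluation points $\beta_n$ (disjoint from the $\alpha_k$), sends $E(\beta_n)$ to worker $n$, who returns $F(E(\beta_n))$; on receiving responses from $\mathcal{N}\in\boldsymbol{\mathcal{N}}$, the master interpolates $D(z)$ of degree at most $N-S-1$ with $D(\beta_n)=F(E(\beta_n))$ for $n\in\mathcal{N}$ and outputs $\widehat{\boldsymbol{Y}}(\mathcal{N})=\sum_kw_kD(\alpha_k)$. The scheme is feasible over $\boldsymbol{\mathcal{N}}$ if $\widehat{\boldsymbol{Y}}(\mathcal{N})=\boldsymbol{Y}$ for all $\mathcal{N}\in\boldsymbol{\mathcal{N}}$ (for all data matrices). *)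

theory Defs
  imports Complex_Main "HOL-Computational_Algebra.Polynomial"
begin

definition exps :: "nat \<Rightarrow> nat \<Rightarrow> (nat \<Rightarrow> nat) set" where
  "exps K D = {e. (\<forall>k<K. e k \<le> D) \<and> (\<forall>k. K \<le> k \<longrightarrow> e k = 0)}"

definition mpoly_eval :: "nat \<Rightarrow> nat \<Rightarrow> ((nat \<Rightarrow> nat) \<Rightarrow> complex) \<Rightarrow> (nat \<Rightarrow> complex) \<Rightarrow> complex" where
  "mpoly_eval K D c a = (\<Sum>e\<in>exps K D. c e * (\<Prod>k<K. a k ^ e k))"

text \<open>A nonzero polynomial (some coefficient is nonzero); its zero set is a proper variety.\<close>
definition mpoly_nonzero :: "nat \<Rightarrow> nat \<Rightarrow> ((nat \<Rightarrow> nat) \<Rightarrow> complex) \<Rightarrow> bool" where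
  "mpoly_nonzero K D c = (\<exists>e\<in>exps K D. c e \<noteq> 0)"

definition nonstraggler_pattern :: "nat \<Rightarrow> nat \<Rightarrow> nat \<Rightarrow> (nat \<Rightarrow> nat set) \<Rightarrow> bool" where
  "nonstraggler_pattern N S G Ns = (G \<ge> 1 \<and> (\<forall>g<G. Ns g \<subseteq> {..<N} \<and> card (Ns g) = N - S))"

definition pattern_inter :: "nat \<Rightarrow> (nat \<Rightarrow> nat set) \<Rightarrow> nat set" where
  "pattern_inter G Ns = (\<Inter>g\<in>{..<G}. Ns g)"

definition Istar :: "nat \<Rightarrow> nat \<Rightarrow> nat" where
  "Istar K d = (if d = 1 then (K - 1) div 2 + 1 else (d - 1) * (K - 1) + 1)"

definition lag :: "(nat \<Rightarrow> complex) \<Rightarrow> nat set \<Rightarrow> nat \<Rightarrow> complex \<Rightarrow> complex" where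
  "lag pts A n z = (\<Prod>m\<in>A - {n}. (z - pts m) / (pts n - pts m))"

text \<open>Encoder: the unique polynomial of degree at most K-1 (entry-wise) with E(alpha_k) = X_k.
  Data matrices are functions from entry positions to complex numbers.\<close>
definition encoder :: "nat \<Rightarrow> (nat \<Rightarrow> complex) \<Rightarrow> (nat \<Rightarrow> 'e \<Rightarrow> complex) \<Rightarrow> complex \<Rightarrow> 'e \<Rightarrow> complex" where
  "encoder K \<alpha> X z e = (\<Sum>k<K. X k e * lag \<alpha> {..<K} k z)"

definition decoder :: "nat \<Rightarrow> (nat \<Rightarrow> complex) \<Rightarrow> (nat \<Rightarrow> complex) \<Rightarrow> complex poly
     \<Rightarrow> (nat \<Rightarrow> 'e \<Rightarrow> complex) \<Rightarrow> nat set \<Rightarrow> complex \<Rightarrow> 'e \<Rightarrow> complex" where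
  "decoder K \<alpha> \<beta> F X Nset z e =
     (\<Sum>n\<in>Nset. poly F (encoder K \<alpha> X (\<beta> n) e) * lag \<beta> Nset n z)"

definition cpa_output :: "nat \<Rightarrow> (nat \<Rightarrow> complex) \<Rightarrow> (nat \<Rightarrow> complex) \<Rightarrow> (nat \<Rightarrow> complex)
     \<Rightarrow> complex poly \<Rightarrow> (nat \<Rightarrow> 'e \<Rightarrow> complex) \<Rightarrow> nat set \<Rightarrow> 'e \<Rightarrow> complex" where
  "cpa_output K w \<alpha> \<beta> F X Nset e = (\<Sum>k<K. w k * decoder K \<alpha> \<beta> F X Nset (\<alpha> k) e)"

definition target :: "nat \<Rightarrow> (nat \<Rightarrow> complex) \<Rightarrow> complex poly \<Rightarrow> (nat \<Rightarrow> 'e \<Rightarrow> complex) \<Rightarrow> 'e \<Rightarrow> complex" where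
  "target K w F X e = (\<Sum>k<K. w k * poly F (X k e))"

text \<open>Feasibility over the pattern, for every polynomial F of degree d and all data matrices
  (matrices are represented as functions on entry positions (i,j)).\<close>
definition cpa_feasible :: "nat \<Rightarrow> nat \<Rightarrow> (nat \<Rightarrow> complex) \<Rightarrow> (nat \<Rightarrow> complex) \<Rightarrow> (nat \<Rightarrow> complex)
     \<Rightarrow> nat \<Rightarrow> (nat \<Rightarrow> nat set) \<Rightarrow> bool" where
  "cpa_feasible K d w \<alpha> \<beta> G Ns =
     (\<forall>F :: complex poly. degree F = d \<longrightarrow>
       (\<forall>X :: nat \<Rightarrow> nat \<times> nat \<Rightarrow> complex. \<forall>g<G. \<forall>e.
          cpa_output K w \<alpha> \<beta> F X (Ns g) e = target K w F X e))"

end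

theory Submission
  imports Defs "Jordan_Normal_Form.Determinant" "HOL-Computational_Algebra.Fundamental_Theorem_Algebra"
begin

inductive polyfun :: "nat \<Rightarrow> ((nat \<Rightarrow> complex) \<Rightarrow> complex) \<Rightarrow> bool" for K where
  polyfun_const: "polyfun K (\<lambda>a. c)"
| polyfun_var: "k < K \<Longrightarrow> polyfun K (\<lambda>a. a k)"
| polyfun_add: "polyfun K f \<Longrightarrow> polyfun K g \<Longrightarrow> polyfun K (\<lambda>a. f a + g a)"
| polyfun_mult: "polyfun K f \<Longrightarrow> polyfun K g \<Longrightarrow> polyfun K (\<lambda>a. f a * g a)"

lemma polyfun_uminus: "polyfun K f \<Longrightarrow> polyfun K (\<lambda>a. - f a)"
  using polyfun_mult[OF polyfun_const[of K "-1"]] by simp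

lemma polyfun_diff: "polyfun K f \<Longrightarrow> polyfun K g \<Longrightarrow> polyfun K (\<lambda>a. f a - g a)"
  using polyfun_add[OF _ polyfun_uminus] by simp

lemma polyfun_sum:
  "finite S \<Longrightarrow> (\<And>i. i \<in> S \<Longrightarrow> polyfun K (f i)) \<Longrightarrow> polyfun K (\<lambda>a. \<Sum>i\<in>S. f i a)"
  by (induction S rule: finite_induct) (auto intro: polyfun_add polyfun_const[of K 0, simplified])

lemma polyfun_prod:
  "finite S \<Longrightarrow> (\<And>i. i \<in> S \<Longrightarrow> polyfun K (f i)) \<Longrightarrow> polyfun K (\<lambda>a. \<Prod>i\<in>S. f i a)"
  by (induction S rule: finite_induct) (auto intro: polyfun_mult polyfun_const[of K 1, simplified])

lemma polyfun_power: "polyfun K f \<Longrightarrow> polyfun K (\<lambda>a. f a ^ n)"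
  by (induction n) (auto intro: polyfun_mult polyfun_const)

lemma polyfun_det:
  assumes "\<And>a. A a \<in> carrier_mat n n"
    and "\<And>i j. i < n \<Longrightarrow> j < n \<Longrightarrow> polyfun K (\<lambda>a. A a $$ (i, j))"
  shows "polyfun K (\<lambda>a. det (A a))"
proof -
  have "p i < n" if "p permutes {0..<n}" "i < n" for p i
    using that permutes_in_image by fastforce
  then have "polyfun K (\<lambda>a. \<Sum>p \<in> {p. p permutes {0..<n}}. signof p * (\<Prod>i = 0..<n. A a $$ (i, p i)))"
    by (intro polyfun_sum polyfun_mult polyfun_const polyfun_prod assms(2))
       (auto simp: finite_permutations)
  then show ?thesis
    using det_def'[OF assms(1)] by simp
qed

lemma polyfun_mat_delete:
  assumes "\<And>a. A a \<in> carrier_mat n n"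
    and "\<And>i j. i < n \<Longrightarrow> j < n \<Longrightarrow> polyfun K (\<lambda>a. A a $$ (i, j))"
    and "i < n - 1" "j < n - 1"
  shows "polyfun K (\<lambda>a. mat_delete (A a) r c $$ (i, j))"
proof -
  have "mat_delete (A a) r c $$ (i, j) = A a $$ (if i < r then i else Suc i, if j < c then j else Suc j)" for a
    using assms(1)[of a] assms(3,4) by (simp add: mat_delete_def)
  then show ?thesis
    using assms(2-4) by (cases "i < r"; cases "j < c") simp_all
qed

lemma polyfun_adj_mat:
  assumes "\<And>a. A a \<in> carrier_mat n n"
    and "\<And>i j. i < n \<Longrightarrow> j < n \<Longrightarrow> polyfun K (\<lambda>a. A a $$ (i, j))"
    and "i < n" "j < n"
  shows "polyfun K (\<lambda>a. adj_mat (A a) $$ (i, j))"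
proof -
  have "adj_mat (A a) $$ (i, j) = (- 1) ^ (j + i) * det (mat_delete (A a) j i)" for a
    using assms(1)[of a] assms(3,4) by (simp add: adj_mat_def cofactor_def)
  moreover have "mat_delete (A a) j i \<in> carrier_mat (n - 1) (n - 1)" for a
    using mat_delete_carrier[OF assms(1)] .
  then have "polyfun K (\<lambda>a. det (mat_delete (A a) j i))"
    by (intro polyfun_det polyfun_mat_delete[OF assms(1,2)]) auto
  ultimately show ?thesis
    by (simp add: polyfun_mult polyfun_const)
qed

lemma finite_exps: "finite (exps K D)"
proof (rule finite_subset)
  show "exps K D \<subseteq> {f. \<forall>x. (x \<in> {..<K} \<longrightarrow> f x \<in> {..D}) \<and> (x \<notin> {..<K} \<longrightarrow> f x = 0)}"
    unfolding exps_def by (auto simp: not_less)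
qed (rule finite_set_of_finite_funs; simp)

lemma mpoly_eval_raise_degree:
  assumes "D \<le> D'"
  shows "\<exists>c'. mpoly_eval K D' c' = mpoly_eval K D c"
proof -
  define c' where "c' e = (if e \<in> exps K D then c e else 0)" for e
  have "exps K D \<subseteq> exps K D'"
    using assms unfolding exps_def by auto
  then have "mpoly_eval K D' c' a = mpoly_eval K D c a" for a
    unfolding mpoly_eval_def
    by (subst sum.mono_neutral_right[of "exps K D'" "exps K D"]) (auto simp: finite_exps c'_def)
  then show ?thesis
    by blast
qed

lemma mpoly_eval_add:
  "\<exists>c. mpoly_eval K D c = (\<lambda>a. mpoly_eval K D c1 a + mpoly_eval K D c2 a)"
  by (rule exI[of _ "\<lambda>e. c1 e + c2 e"]) (simp add: mpoly_eval_def sum.distrib algebra_simps fun_eq_iff)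

lemma mpoly_eval_mult:
  "\<exists>c. mpoly_eval K (D1 + D2) c = (\<lambda>a. mpoly_eval K D1 c1 a * mpoly_eval K D2 c2 a)"
proof -
  define S where "S = exps K D1 \<times> exps K D2"
  define plus where "plus x k = fst x k + snd x k" for x :: "(nat \<Rightarrow> nat) \<times> (nat \<Rightarrow> nat)" and k
  define c where "c e = (\<Sum>x\<in>{x\<in>S. plus x = e}. c1 (fst x) * c2 (snd x))" for e
  have plus_exps: "plus ` S \<subseteq> exps K (D1 + D2)"
    unfolding S_def plus_def exps_def by (auto simp: add_mono)
  have "mpoly_eval K D1 c1 a * mpoly_eval K D2 c2 a = mpoly_eval K (D1 + D2) c a" for a
  proof -
    have "mpoly_eval K D1 c1 a * mpoly_eval K D2 c2 a
        = (\<Sum>x\<in>S. c1 (fst x) * c2 (snd x) * (\<Prod>k<K. a k ^ plus x k))"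
      unfolding mpoly_eval_def S_def plus_def
      by (simp add: sum_product sum.cartesian_product case_prod_beta power_add prod.distrib
          algebra_simps)
    also have "\<dots> = (\<Sum>e\<in>exps K (D1 + D2). \<Sum>x\<in>{x\<in>S. plus x = e}.
                      c1 (fst x) * c2 (snd x) * (\<Prod>k<K. a k ^ plus x k))"
      using plus_exps by (intro sum.group[symmetric]) (auto simp: S_def finite_exps)
    also have "\<dots> = mpoly_eval K (D1 + D2) c a"
      unfolding mpoly_eval_def c_def sum_distrib_right by (intro sum.cong refl) auto
    finally show ?thesis .
  qed
  then show ?thesis
    by (intro exI[of _ c] ext) simp
qed

lemma mpoly_eval_const: "mpoly_eval K 0 (\<lambda>e. c) = (\<lambda>a. c)"
proof -
  have "exps K 0 = {\<lambda>_. 0}"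
  proof (intro Set.set_eqI iffI)
    fix e
    assume "e \<in> exps K 0"
    then show "e \<in> {\<lambda>_. 0}"
      unfolding exps_def by (auto simp: fun_eq_iff not_less[symmetric])
  qed (simp add: exps_def)
  then show ?thesis
    unfolding mpoly_eval_def by simp
qed

lemma mpoly_eval_var:
  assumes "k < K"
  shows "\<exists>c. mpoly_eval K 1 c = (\<lambda>a. a k)"
proof -
  define ek :: "nat \<Rightarrow> nat" where "ek i = (if i = k then 1 else 0)" for i
  have ek: "ek \<in> exps K 1"
    unfolding exps_def ek_def using assms by auto
  have "mpoly_eval K 1 (\<lambda>e. if e = ek then 1 else 0) a = a k" for a
  proof -
    have "mpoly_eval K 1 (\<lambda>e. if e = ek then 1 else 0) a
        = (\<Sum>e\<in>exps K 1. if e = ek then \<Prod>i<K. a i ^ e i else 0)"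
      unfolding mpoly_eval_def by (intro sum.cong) auto
    also have "\<dots> = (\<Prod>i<K. a i ^ ek i)"
      using ek by (simp add: finite_exps)
    also have "\<dots> = (\<Prod>i<K. if i = k then a i else 1)"
      by (intro prod.cong) (auto simp: ek_def)
    also have "\<dots> = a k"
      using assms by simp
    finally show ?thesis .
  qed
  then show ?thesis
    by (intro exI ext)
qed

lemma polyfun_imp_mpoly_eval: "polyfun K f \<Longrightarrow> \<exists>D c. f = mpoly_eval K D c"
proof (induction rule: polyfun.induct)
  case (polyfun_const c)
  then show ?case
    using mpoly_eval_const by metis
next
  case (polyfun_var k)
  then show ?case
    using mpoly_eval_var by (metis (no_types))
next
  case (polyfun_add f g)
  then obtain D1 c1 D2 c2 where "f = mpoly_eval K D1 c1" "g = mpoly_eval K D2 c2"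
    by blast
  moreover obtain c1' c2' where
    "mpoly_eval K (max D1 D2) c1' = mpoly_eval K D1 c1"
    "mpoly_eval K (max D1 D2) c2' = mpoly_eval K D2 c2"
    using mpoly_eval_raise_degree[of D1 "max D1 D2" K c1] mpoly_eval_raise_degree[of D2 "max D1 D2" K c2]
    by auto
  moreover obtain c where
    "mpoly_eval K (max D1 D2) c = (\<lambda>a. mpoly_eval K (max D1 D2) c1' a + mpoly_eval K (max D1 D2) c2' a)"
    using mpoly_eval_add by blast
  ultimately show ?case
    by (metis (no_types))
next
  case (polyfun_mult f g)
  then obtain D1 c1 D2 c2 where "f = mpoly_eval K D1 c1" "g = mpoly_eval K D2 c2"
    by blast
  moreover obtain c where
    "mpoly_eval K (D1 + D2) c = (\<lambda>a. mpoly_eval K D1 c1 a * mpoly_eval K D2 c2 a)"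
    using mpoly_eval_mult by blast
  ultimately show ?case
    by (metis (no_types))
qed

lemma mpoly_nonzero_if_eval_nonzero: "mpoly_eval K D c a \<noteq> 0 \<Longrightarrow> mpoly_nonzero K D c"
  unfolding mpoly_nonzero_def mpoly_eval_def by (metis (no_types, lifting) mult_eq_0_iff sum.neutral)

lemma polyfun_on_line: "polyfun K f \<Longrightarrow> \<exists>p. \<forall>t. f (\<lambda>k. a k + t * v k) = poly p t"
proof (induction rule: polyfun.induct)
  case (polyfun_const c)
  then show ?case by (intro exI[of _ "[:c:]"]) simp
next
  case (polyfun_var k)
  then show ?case by (intro exI[of _ "[:a k, v k:]"]) (simp add: algebra_simps)
next
  case (polyfun_add f g)
  then obtain p q where "\<forall>t. f (\<lambda>k. a k + t * v k) = poly p t" "\<forall>t. g (\<lambda>k. a k + t * v k) = poly q t"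
    by blast
  then show ?case by (intro exI[of _ "p + q"]) simp
next
  case (polyfun_mult f g)
  then obtain p q where "\<forall>t. f (\<lambda>k. a k + t * v k) = poly p t" "\<forall>t. g (\<lambda>k. a k + t * v k) = poly q t"
    by blast
  then show ?case by (intro exI[of _ "p * q"]) simp
qed

text \<open>The zero set of a nonzero polynomial function is nowhere dense: restricted to the line
  through a point where \<open>f\<close> is nonzero and a point where \<open>g\<close> is nonzero, \<open>f * g\<close> becomes a
  nonzero univariate polynomial.\<close>

lemma polyfun_mult_nonzero:
  assumes "polyfun K f" "polyfun K g" "f a \<noteq> 0" "g b \<noteq> 0"
  shows "\<exists>x. f x * g x \<noteq> 0"
proof -
  obtain p q where
    p: "\<forall>t. f (\<lambda>k. a k + t * (b k - a k)) = poly p t" and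
    q: "\<forall>t. g (\<lambda>k. a k + t * (b k - a k)) = poly q t"
    using polyfun_on_line assms(1,2) by meson
  have "poly p 0 \<noteq> 0" "poly q 1 \<noteq> 0"
    using p[rule_format, of 0] q[rule_format, of 1] assms(3,4) by simp_all
  then have "p * q \<noteq> 0"
    by auto
  then obtain t where "poly (p * q) t \<noteq> 0"
    using poly_roots_finite ex_new_if_finite[OF infinite_UNIV_char_0] by blast
  then show ?thesis
    using p q by (intro exI[of _ "\<lambda>k. a k + t * (b k - a k)"]) simp
qed

lemma polyfun_prod_nonzero:
  assumes "finite S" "\<And>i. i \<in> S \<Longrightarrow> polyfun K (f i)" "\<And>i. i \<in> S \<Longrightarrow> \<exists>a. f i a \<noteq> 0"
  shows "\<exists>a. (\<Prod>i\<in>S. f i a) \<noteq> 0"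
  using assms
proof (induction S rule: finite_induct)
  case (insert x F)
  then obtain a b where "(\<Prod>i\<in>F. f i a) \<noteq> 0" "f x b \<noteq> 0"
    by blast
  moreover have "polyfun K (\<lambda>a. \<Prod>i\<in>F. f i a)"
    using insert by (intro polyfun_prod) auto
  ultimately obtain c where "f x c * (\<Prod>i\<in>F. f i c) \<noteq> 0"
    using polyfun_mult_nonzero[of K "f x"] insert.prems(1) by blast
  then show ?case
    using insert.hyps by auto
qed simp

lemma degree_prod_linear:
  "finite J \<Longrightarrow> degree (\<Prod>l\<in>J. [:- b l, 1 :: complex:]) = card J"
  by (subst degree_prod_sum_eq) auto

lemma lead_coeff_prod_linear: "lead_coeff (\<Prod>l\<in>J. [:- b l, 1 :: complex:]) = 1"
  by (simp add: lead_coeff_prod)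

lemma poly_prod_linear_eq_0_iff:
  "finite J \<Longrightarrow> poly (\<Prod>l\<in>J. [:- b l, 1 :: complex:]) z = 0 \<longleftrightarrow> (\<exists>l\<in>J. z = b l)"
  by (simp add: poly_prod)

lemma poly_pderiv_prod_linear_at_root:
  assumes "finite J" "inj_on b J" "l \<in> J"
  shows "poly (pderiv (\<Prod>m\<in>J. [:- b m, 1 :: complex:])) (b l) = (\<Prod>m\<in>J - {l}. b l - b m)"
proof -
  have "(\<Prod>m\<in>J. [:- b m, 1 :: complex:]) = [:- b l, 1:] * (\<Prod>m\<in>J - {l}. [:- b m, 1:])"
    using assms by (simp add: prod.remove)
  then show ?thesis
    by (simp only: pderiv_mult) (simp add: pderiv_pCons poly_prod)
qed

lemma rsquarefree_prod_linear:
  assumes "finite J" "inj_on b J"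
  shows "rsquarefree (\<Prod>l\<in>J. [:- b l, 1 :: complex:])"
  unfolding rsquarefree_roots
proof (intro allI notI)
  fix z
  assume z: "poly (\<Prod>l\<in>J. [:- b l, 1:]) z = 0 \<and> poly (pderiv (\<Prod>l\<in>J. [:- b l, 1:])) z = 0"
  then obtain l where l: "l \<in> J" "z = b l"
    using assms(1) poly_prod_linear_eq_0_iff by blast
  have "b l - b m \<noteq> 0" if "m \<in> J - {l}" for m
    using that l(1) assms(2) by (auto dest: inj_onD)
  then have "poly (pderiv (\<Prod>l\<in>J. [:- b l, 1:])) z \<noteq> 0"
    using poly_pderiv_prod_linear_at_root[OF assms l(1)] l(2) assms(1) by simp
  then show False
    using z by simp
qed

lemma prod_linear_dvd:
  fixes p :: "complex poly"
  assumes "finite A" "inj_on b A" "\<forall>n\<in>A. poly p (b n) = 0"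
  shows "(\<Prod>n\<in>A. [:- b n, 1:]) dvd p"
  using assms
proof (induction A arbitrary: p rule: finite_induct)
  case (insert x A)
  obtain q where q: "p = [:- b x, 1:] * q"
    using insert.prems(2) by (auto simp: poly_eq_0_iff_dvd)
  have "b n \<noteq> b x" if "n \<in> A" for n
    using inj_onD[OF insert.prems(1), of n x] that insert.hyps(2) by auto
  then have "\<forall>n\<in>A. poly q (b n) = 0"
    using insert.prems(2) q by auto
  then have "(\<Prod>n\<in>A. [:- b n, 1:]) dvd q"
    using insert by simp
  then show ?case
    unfolding q prod.insert[OF insert.hyps] by (rule mult_dvd_mono[OF dvd_refl])
qed simp

lemma rsquarefree_mult:
  fixes p q :: "complex poly"
  assumes "rsquarefree p" "rsquarefree q" "\<forall>z. poly p z = 0 \<longrightarrow> poly q z \<noteq> 0"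
  shows "rsquarefree (p * q)"
  unfolding rsquarefree_roots
proof (intro allI notI)
  fix z
  assume z: "poly (p * q) z = 0 \<and> poly (pderiv (p * q)) z = 0"
  have "poly (pderiv (p * q)) z = poly p z * poly (pderiv q) z + poly q z * poly (pderiv p) z"
    by (simp add: pderiv_mult)
  then show False
    using z assms unfolding rsquarefree_roots by (cases "poly p z = 0") auto
qed

lemma card_roots_rsquarefree:
  assumes "rsquarefree (P :: complex poly)"
  shows "card {z. poly P z = 0} = degree P"
proof -
  have "P \<noteq> 0"
    using assms unfolding rsquarefree_def by simp
  have "degree P = degree (Polynomial.smult (lead_coeff P) (\<Prod>z | poly P z = 0. [:- z, 1:]))"
    using complex_poly_decompose_rsquarefree[OF assms] by simp
  also have "\<dots> = card {z. poly P z = 0}"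
    using \<open>P \<noteq> 0\<close> poly_roots_finite[OF \<open>P \<noteq> 0\<close>]
    by (simp add: degree_prod_linear[where b = "\<lambda>z. z"])
  finally show ?thesis
    by simp
qed

lemma rsquarefree_monic_eq_prod_linear:
  fixes P :: "complex poly"
  assumes "finite S" "degree P = card S" "lead_coeff P = 1" "rsquarefree P"
  obtains \<beta> where "inj_on \<beta> S" "\<beta> ` S = {z. poly P z = 0}" "\<And>z. poly P z = (\<Prod>n\<in>S. z - \<beta> n)"
proof -
  define R where "R = {z. poly P z = 0}"
  have "P \<noteq> 0"
    using assms(3) by auto
  then have "finite R"
    unfolding R_def by (rule poly_roots_finite)
  moreover have "card R = card S"
    unfolding R_def using card_roots_rsquarefree[OF assms(4)] assms(2) by simp
  ultimately obtain \<beta> where \<beta>: "bij_betw \<beta> S R"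
    using finite_same_card_bij[OF assms(1)] by metis
  have decompose: "P = Polynomial.smult (lead_coeff P) (\<Prod>z\<in>R. [:- z, 1:])"
    using complex_poly_decompose_rsquarefree[OF assms(4)] unfolding R_def by simp
  have "poly P z = (\<Prod>x\<in>R. z - x)" for z
    by (subst decompose) (simp add: assms(3) poly_prod)
  also have "\<dots> z = (\<Prod>n\<in>S. z - \<beta> n)" for z
    using prod.reindex_bij_betw[OF \<beta>, of "\<lambda>x. z - x"] by simp
  finally show ?thesis
    using \<beta> that unfolding bij_betw_def R_def by blast
qed

definition lagrange_basis :: "(nat \<Rightarrow> complex) \<Rightarrow> nat set \<Rightarrow> nat \<Rightarrow> complex poly" where
  "lagrange_basis x A n =
     Polynomial.smult (1 / (\<Prod>m\<in>A - {n}. x n - x m)) (\<Prod>m\<in>A - {n}. [:- x m, 1:])"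

lemma poly_lagrange_basis: "finite A \<Longrightarrow> poly (lagrange_basis x A n) z = lag x A n z"
  unfolding lagrange_basis_def lag_def by (simp add: poly_prod prod_dividef)

lemma degree_lagrange_basis:
  assumes "finite A" "n \<in> A"
  shows "degree (lagrange_basis x A n) \<le> card A - 1"
proof -
  have "degree (\<Prod>m\<in>A - {n}. [:- x m, 1:]) = card A - 1"
    using assms by (simp add: degree_prod_linear)
  then show ?thesis
    unfolding lagrange_basis_def using degree_smult_le by metis
qed

lemma lag_at_node:
  assumes "finite A" "inj_on x A" "n \<in> A" "m \<in> A"
  shows "lag x A n (x m) = (if m = n then 1 else 0)"
proof (cases "m = n")
  case True
  have "x n - x l \<noteq> 0" if "l \<in> A - {n}" for l
    using assms(2,3) that by (auto dest: inj_onD)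
  then show ?thesis
    unfolding lag_def using True by (simp add: prod_dividef)
next
  case False
  then show ?thesis
    unfolding lag_def using assms by (auto intro!: prod_zero bexI[of _ m])
qed

lemma coeff_lagrange_basis_top:
  assumes "finite A" "n \<in> A"
  shows "coeff (lagrange_basis x A n) (card A - 1) = 1 / (\<Prod>m\<in>A - {n}. x n - x m)"
proof -
  have "card (A - {n}) = card A - 1"
    using assms by simp
  then show ?thesis
    unfolding lagrange_basis_def
    using degree_prod_linear[of "A - {n}" x] lead_coeff_prod_linear[of x "A - {n}"] assms(1)
    by simp
qed

definition interpolant :: "(nat \<Rightarrow> complex) \<Rightarrow> nat set \<Rightarrow> (nat \<Rightarrow> complex) \<Rightarrow> complex poly" where
  "interpolant x A y = (\<Sum>n\<in>A. Polynomial.smult (y n) (lagrange_basis x A n))"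

lemma poly_interpolant: "finite A \<Longrightarrow> poly (interpolant x A y) z = (\<Sum>n\<in>A. y n * lag x A n z)"
  unfolding interpolant_def by (simp add: poly_sum poly_lagrange_basis)

lemma poly_interpolant_node:
  assumes "finite A" "inj_on x A" "m \<in> A"
  shows "poly (interpolant x A y) (x m) = y m"
proof -
  have "poly (interpolant x A y) (x m) = (\<Sum>n\<in>A. y n * lag x A n (x m))"
    using assms(1) by (rule poly_interpolant)
  also have "\<dots> = (\<Sum>n\<in>A. if n = m then y n else 0)"
    using assms by (intro sum.cong refl) (simp add: lag_at_node)
  also have "\<dots> = y m"
    using assms(1,3) by simp
  finally show ?thesis .
qed

lemma degree_interpolant:
  assumes "finite A"
  shows "degree (interpolant x A y) \<le> card A - 1"
  unfolding interpolant_def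
proof (rule degree_sum_le[OF assms])
  fix n
  assume "n \<in> A"
  then show "degree (Polynomial.smult (y n) (lagrange_basis x A n)) \<le> card A - 1"
    using degree_smult_le degree_lagrange_basis[OF assms] order_trans by blast
qed

lemma interpolant_poly:
  fixes x :: "nat \<Rightarrow> complex"
  assumes "finite A" "inj_on x A" "degree f < card A"
  shows "interpolant x A (\<lambda>n. poly f (x n)) = f"
proof (rule poly_eqI_degree[of "x ` A"])
  show "poly (interpolant x A (\<lambda>n. poly f (x n))) z = poly f z" if "z \<in> x ` A" for z
    using that assms by (auto simp: poly_interpolant_node)
  have "card A > 0"
    using assms(3) by linarith
  then have "degree (interpolant x A (\<lambda>n. poly f (x n))) < card A"
    using degree_interpolant[OF assms(1), of x "\<lambda>n. poly f (x n)"] by linarith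
  then show "degree (interpolant x A (\<lambda>n. poly f (x n))) < card (x ` A)"
    using assms(2) by (simp add: card_image)
  show "degree f < card (x ` A)"
    using assms by (simp add: card_image)
qed

text \<open>Comparing the coefficients of degree \<open>card A - 1\<close> in the Lagrange interpolation formula.\<close>

lemma sum_poly_div_prod_differences:
  fixes x :: "nat \<Rightarrow> complex"
  assumes "finite A" "inj_on x A" "degree f < card A"
  shows "(\<Sum>n\<in>A. poly f (x n) / (\<Prod>m\<in>A - {n}. x n - x m)) = coeff f (card A - 1)"
proof -
  have "coeff f (card A - 1) = coeff (interpolant x A (\<lambda>n. poly f (x n))) (card A - 1)"
    using interpolant_poly[OF assms] by simp
  also have "\<dots> = (\<Sum>n\<in>A. poly f (x n) / (\<Prod>m\<in>A - {n}. x n - x m))"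
    unfolding interpolant_def coeff_sum
    using assms(1) coeff_lagrange_basis_top[OF assms(1)] by (intro sum.cong refl) simp
  finally show ?thesis ..
qed

definition orthogonal_upto ::
    "nat \<Rightarrow> (nat \<Rightarrow> complex) \<Rightarrow> (nat \<Rightarrow> complex) \<Rightarrow> nat \<Rightarrow> complex poly \<Rightarrow> bool" where
  "orthogonal_upto K u a n p \<longleftrightarrow> (\<forall>j<n. (\<Sum>k<K. u k * poly p (a k) * a k ^ j) = 0)"

lemma poly_eq_sum_lessThan:
  fixes f :: "'a :: comm_semiring_1 poly"
  shows "degree f < n \<Longrightarrow> poly f x = (\<Sum>i<n. coeff f i * x ^ i)"
  unfolding poly_altdef by (rule sum.mono_neutral_left) (auto simp: coeff_eq_0)

lemma orthogonal_upto_poly: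
  assumes "orthogonal_upto K u a n p" "degree f < n"
  shows "(\<Sum>k<K. u k * poly p (a k) * poly f (a k)) = 0"
proof -
  have "(\<Sum>k<K. u k * poly p (a k) * poly f (a k))
      = (\<Sum>i<n. coeff f i * (\<Sum>k<K. u k * poly p (a k) * a k ^ i))"
    using assms(2)
    by (simp add: poly_eq_sum_lessThan sum_distrib_left sum_distrib_right sum.swap[of _ "{..<K}"]
        algebra_simps)
  also have "\<dots> = 0"
    using assms(1) unfolding orthogonal_upto_def by simp
  finally show ?thesis .
qed

lemma orthogonal_upto_mono: "m \<le> n \<Longrightarrow> orthogonal_upto K u a n p \<Longrightarrow> orthogonal_upto K u a m p"
  unfolding orthogonal_upto_def by auto

lemma orthogonal_upto_mult:
  assumes "orthogonal_upto K u a (m + degree q) p"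
  shows "orthogonal_upto K u a m (p * q)"
  unfolding orthogonal_upto_def
proof (intro allI impI)
  fix j
  assume j: "j < m"
  have "degree (q * monom 1 j) < m + degree q"
    using j by (cases "q = 0") (simp_all add: degree_mult_eq degree_monom_eq)
  then have "(\<Sum>k<K. u k * poly p (a k) * poly (q * monom 1 j) (a k)) = 0"
    by (rule orthogonal_upto_poly[OF assms])
  then show "(\<Sum>k<K. u k * poly (p * q) (a k) * a k ^ j) = 0"
    by (simp add: poly_monom algebra_simps)
qed

text \<open>Dually, moments up to order \<open>K - 1\<close> determine the weights on \<open>K\<close> distinct nodes
  (invertibility of the Vandermonde matrix).\<close>

lemma orthogonal_upto_imp_zero_at_nodes:
  assumes "inj_on a {..<K}" "K \<le> n" "orthogonal_upto K u a n p" "k < K"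
  shows "u k * poly p (a k) = 0"
proof -
  have "degree (lagrange_basis a {..<K} k) < n"
    using degree_lagrange_basis[of "{..<K}" k a] assms(2,4) by simp
  then have "(\<Sum>l<K. u l * poly p (a l) * poly (lagrange_basis a {..<K} k) (a l)) = 0"
    by (rule orthogonal_upto_poly[OF assms(3)])
  moreover have "(\<Sum>l<K. u l * poly p (a l) * poly (lagrange_basis a {..<K} k) (a l))
      = (\<Sum>l<K. if l = k then u l * poly p (a l) else 0)"
    using assms(1,4) by (intro sum.cong refl) (simp add: poly_lagrange_basis lag_at_node)
  ultimately show ?thesis
    using assms(4) by simp
qed

definition vec_poly :: "'a :: comm_monoid_add vec \<Rightarrow> nat \<Rightarrow> nat \<Rightarrow> 'a poly" where
  "vec_poly v s n = (\<Sum>j<n. monom (v $ (s + j)) j)"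

lemma coeff_vec_poly: "coeff (vec_poly v s n) j = (if j < n then v $ (s + j) else 0)"
  unfolding vec_poly_def by (simp add: coeff_sum)

lemma degree_vec_poly: "n > 0 \<Longrightarrow> degree (vec_poly v s n) < n"
  using degree_le[of "n - 1" "vec_poly v s n"] by (fastforce simp: coeff_vec_poly)

definition moment :: "nat \<Rightarrow> (nat \<Rightarrow> complex) \<Rightarrow> (nat \<Rightarrow> complex) \<Rightarrow> nat \<Rightarrow> complex" where
  "moment K u a i = (\<Sum>k<K. u k * a k ^ i)"

definition hankel :: "nat \<Rightarrow> (nat \<Rightarrow> complex) \<Rightarrow> (nat \<Rightarrow> complex) \<Rightarrow> nat \<Rightarrow> complex mat" where
  "hankel K u a n = mat n n (\<lambda>(i, j). moment K u a (i + j))"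

lemma hankel_carrier: "hankel K u a n \<in> carrier_mat n n"
  unfolding hankel_def by simp

lemma sum_moment_mult_coeff:
  assumes "degree p < n"
  shows "(\<Sum>i<n. moment K u a (j + i) * coeff p i) = (\<Sum>k<K. u k * poly p (a k) * a k ^ j)"
proof -
  have "(\<Sum>i<n. moment K u a (j + i) * coeff p i)
      = (\<Sum>k<K. u k * a k ^ j * (\<Sum>i<n. coeff p i * a k ^ i))"
    unfolding moment_def
    by (simp add: sum_distrib_left sum_distrib_right sum.swap[of _ "{..<K}"] power_add algebra_simps)
  also have "\<dots> = (\<Sum>k<K. u k * poly p (a k) * a k ^ j)"
    using assms by (simp add: poly_eq_sum_lessThan algebra_simps)
  finally show ?thesis .
qed

lemma hankel_mult_vec:
  assumes "v \<in> carrier_vec n" "j < n"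
  shows "(hankel K u a n *\<^sub>v v) $ j = (\<Sum>i<n. moment K u a (j + i) * v $ i)"
  using assms unfolding hankel_def by (simp add: scalar_prod_def atLeast0LessThan)

lemma hankel_mult_vec_coeff:
  assumes "degree p < n" "j < n"
  shows "(hankel K u a n *\<^sub>v vec n (coeff p)) $ j = (\<Sum>k<K. u k * poly p (a k) * a k ^ j)"
  using assms hankel_mult_vec[of "vec n (coeff p)" n j] sum_moment_mult_coeff[OF assms(1)] by simp

lemma hankel_mult_vec_coeff_eq_0_iff:
  assumes "degree p < n"
  shows "hankel K u a n *\<^sub>v vec n (coeff p) = 0\<^sub>v n \<longleftrightarrow> orthogonal_upto K u a n p"
proof -
  have "hankel K u a n *\<^sub>v vec n (coeff p) = 0\<^sub>v n
      \<longleftrightarrow> (\<forall>j<n. (hankel K u a n *\<^sub>v vec n (coeff p)) $ j = 0)"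
    using hankel_carrier[of K u a n] by (auto simp: vec_eq_iff)
  then show ?thesis
    using assms by (simp add: hankel_mult_vec_coeff orthogonal_upto_def)
qed

lemma poly_eq_0_if_vec_coeff_eq_0:
  assumes "degree p < n" "vec n (coeff p) = 0\<^sub>v n"
  shows "p = 0"
proof (rule poly_eqI)
  fix i
  show "coeff p i = coeff 0 i"
  proof (cases "i < n")
    case True
    then show ?thesis
      using assms(2) by (metis coeff_0 index_vec index_zero_vec(1))
  qed (use assms(1) in \<open>simp add: coeff_eq_0\<close>)
qed

lemma det_hankel_nonzero_iff:
  "det (hankel K u a n) \<noteq> 0 \<longleftrightarrow> (\<forall>p. degree p < n \<longrightarrow> orthogonal_upto K u a n p \<longrightarrow> p = 0)"
proof
  assume det: "det (hankel K u a n) \<noteq> 0"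
  show "\<forall>p. degree p < n \<longrightarrow> orthogonal_upto K u a n p \<longrightarrow> p = 0"
  proof (intro allI impI)
    fix p :: "complex poly"
    assume "degree p < n" "orthogonal_upto K u a n p"
    then have "hankel K u a n *\<^sub>v vec n (coeff p) = 0\<^sub>v n"
      by (simp add: hankel_mult_vec_coeff_eq_0_iff)
    then have "vec n (coeff p) = 0\<^sub>v n"
      using det det_0_iff_vec_prod_zero[OF hankel_carrier, of K u a] vec_carrier by blast
    then show "p = 0"
      by (rule poly_eq_0_if_vec_coeff_eq_0[OF \<open>degree p < n\<close>])
  qed
next
  assume injective: "\<forall>p. degree p < n \<longrightarrow> orthogonal_upto K u a n p \<longrightarrow> p = 0"
  show "det (hankel K u a n) \<noteq> 0"
  proof
    assume "det (hankel K u a n) = 0"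
    then obtain v where v: "v \<in> carrier_vec n" "v \<noteq> 0\<^sub>v n" "hankel K u a n *\<^sub>v v = 0\<^sub>v n"
      using det_0_iff_vec_prod_zero[OF hankel_carrier] by blast
    then have "n \<noteq> 0"
      by auto
    then have "degree (vec_poly v 0 n) < n"
      by (simp add: degree_vec_poly)
    moreover have coeffs: "vec n (coeff (vec_poly v 0 n)) = v"
      using v(1) by (intro eq_vecI) (simp_all add: coeff_vec_poly)
    ultimately have "orthogonal_upto K u a n (vec_poly v 0 n)"
      using hankel_mult_vec_coeff_eq_0_iff[of "vec_poly v 0 n" n K u a] v(3) by simp
    then have "vec_poly v 0 n = 0"
      using injective \<open>degree (vec_poly v 0 n) < n\<close> by blast
    then show False
      using coeffs v(2) by auto
  qed
qed

lemma mult_adj_mat_vec: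
  assumes "A \<in> carrier_mat n n" "b \<in> carrier_vec n"
  shows "A *\<^sub>v (adj_mat A *\<^sub>v b) = det A \<cdot>\<^sub>v b"
proof -
  have "A *\<^sub>v (adj_mat A *\<^sub>v b) = (A * adj_mat A) *\<^sub>v b"
    using assms adj_mat(1)[OF assms(1)] by simp
  also have "\<dots> = (det A \<cdot>\<^sub>m 1\<^sub>m n) *\<^sub>v b"
    using adj_mat(2)[OF assms(1)] by simp
  also have "\<dots> = det A \<cdot>\<^sub>v b"
  proof (rule eq_vecI)
    fix i
    assume "i < dim_vec (det A \<cdot>\<^sub>v b)"
    then have i: "i < n"
      using assms(2) by simp
    then have "((det A \<cdot>\<^sub>m 1\<^sub>m n) *\<^sub>v b) $ i = (\<Sum>j\<in>{0..<n}. det A * (if j = i then 1 else 0) * b $ j)"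
      using assms(2) by (simp add: scalar_prod_def)
    also have "\<dots> = (\<Sum>j\<in>{0..<n}. if j = i then det A * b $ j else 0)"
      by (intro sum.cong) auto
    also have "\<dots> = (det A \<cdot>\<^sub>v b) $ i"
      using i assms(2) by simp
    finally show "((det A \<cdot>\<^sub>m 1\<^sub>m n) *\<^sub>v b) $ i = (det A \<cdot>\<^sub>v b) $ i" .
  qed (use assms(2) in simp)
  finally show ?thesis .
qed

text \<open>By Cramer's rule, \<open>orth_poly K w r a\<close> is \<open>det (hankel K w a r)\<close> times the monic polynomial
  of degree \<open>r\<close> orthogonal to all polynomials of lower degree; this scaling makes its coefficients
  polynomial in the nodes.\<close>

definition orth_poly_coeff :: "nat \<Rightarrow> (nat \<Rightarrow> complex) \<Rightarrow> nat \<Rightarrow> (nat \<Rightarrow> complex) \<Rightarrow> nat \<Rightarrow> complex" where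
  "orth_poly_coeff K w r a i =
     (if i < r then - (adj_mat (hankel K w a r) *\<^sub>v vec r (\<lambda>j. moment K w a (j + r))) $ i
      else if i = r then det (hankel K w a r) else 0)"

definition orth_poly :: "nat \<Rightarrow> (nat \<Rightarrow> complex) \<Rightarrow> nat \<Rightarrow> (nat \<Rightarrow> complex) \<Rightarrow> complex poly" where
  "orth_poly K w r a = (\<Sum>i\<le>r. monom (orth_poly_coeff K w r a i) i)"

lemma coeff_orth_poly: "coeff (orth_poly K w r a) i = orth_poly_coeff K w r a i"
  unfolding orth_poly_def by (simp add: coeff_sum orth_poly_coeff_def)

lemma degree_orth_poly_le: "degree (orth_poly K w r a) \<le> r"
  by (rule degree_le) (simp add: coeff_orth_poly orth_poly_coeff_def)

lemma lead_coeff_orth_poly: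
  assumes "det (hankel K w a r) \<noteq> 0"
  shows "degree (orth_poly K w r a) = r" "lead_coeff (orth_poly K w r a) = det (hankel K w a r)"
proof -
  show "degree (orth_poly K w r a) = r"
    using assms degree_orth_poly_le[of K w r a] le_degree[of "orth_poly K w r a" r]
    by (simp add: coeff_orth_poly orth_poly_coeff_def)
  then show "lead_coeff (orth_poly K w r a) = det (hankel K w a r)"
    by (simp add: coeff_orth_poly orth_poly_coeff_def)
qed

lemma orthogonal_orth_poly: "orthogonal_upto K w a r (orth_poly K w r a)"
  unfolding orthogonal_upto_def
proof (intro allI impI)
  fix j
  assume j: "j < r"
  let ?H = "hankel K w a r" and ?b = "vec r (\<lambda>j. moment K w a (j + r))"
  have "(\<Sum>k<K. w k * poly (orth_poly K w r a) (a k) * a k ^ j)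
      = (\<Sum>i<Suc r. moment K w a (j + i) * orth_poly_coeff K w r a i)"
    using sum_moment_mult_coeff[of "orth_poly K w r a" "Suc r"] degree_orth_poly_le
    by (simp add: coeff_orth_poly le_imp_less_Suc)
  also have "\<dots> = det ?H * moment K w a (j + r) - (\<Sum>i<r. moment K w a (j + i) * (adj_mat ?H *\<^sub>v ?b) $ i)"
    by (simp add: orth_poly_coeff_def sum_negf)
  also have "\<dots> = det ?H * moment K w a (j + r) - (?H *\<^sub>v (adj_mat ?H *\<^sub>v ?b)) $ j"
    using hankel_mult_vec[OF _ j] mult_mat_vec_carrier[OF adj_mat(1)[OF hankel_carrier]] by simp
  also have "\<dots> = 0"
    using j mult_adj_mat_vec[OF hankel_carrier, of ?b] by simp
  finally show "(\<Sum>k<K. w k * poly (orth_poly K w r a) (a k) * a k ^ j) = 0" .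
qed

lemma poly_nonzero_if_shifted_hankel:
  assumes "orthogonal_upto K w a r P" "P \<noteq> 0" "degree P \<le> r"
    and "det (hankel K (\<lambda>k. w k * (a k - z)) a r) \<noteq> 0"
  shows "poly P z \<noteq> 0"
proof
  assume "poly P z = 0"
  then have "[:- z, 1:] dvd P"
    by (rule poly_eq_0_iff_dvd[THEN iffD1])
  then obtain R where R: "P = [:- z, 1:] * R"
    by (rule dvdE)
  have "R \<noteq> 0"
    using assms(2) R by auto
  then have "degree P = Suc (degree R)"
    unfolding R by (subst degree_mult_eq) auto
  then have "degree R < r"
    using assms(3) by simp
  moreover have "orthogonal_upto K (\<lambda>k. w k * (a k - z)) a r R"
    unfolding orthogonal_upto_def
  proof (intro allI impI)
    fix j
    assume "j < r"
    have poly_P: "poly P x = (x - z) * poly R x" for x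
      unfolding R by (simp add: algebra_simps)
    have "(\<Sum>k<K. w k * (a k - z) * poly R (a k) * a k ^ j) = (\<Sum>k<K. w k * poly P (a k) * a k ^ j)"
      by (simp add: poly_P mult_ac)
    then show "(\<Sum>k<K. w k * (a k - z) * poly R (a k) * a k ^ j) = 0"
      using assms(1) \<open>j < r\<close> unfolding orthogonal_upto_def by simp
  qed
  ultimately have "R = 0"
    by (rule det_hankel_nonzero_iff[THEN iffD1, OF assms(4), rule_format])
  with \<open>R \<noteq> 0\<close> show False ..
qed

lemma sum_lessThan_add: "(\<Sum>j<m + (n :: nat). f j) = (\<Sum>j<m. f j) + (\<Sum>j<n. f (m + j))"
  by (induction n) (simp_all add: add_ac)

lemma coeff_vec_poly_mult:
  fixes v :: "'a :: comm_semiring_1 vec"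
  shows "coeff (vec_poly v s n * Q) i = (\<Sum>j<n. coeff (monom 1 j * Q) i * v $ (s + j))"
proof -
  have "monom (v $ (s + j)) j * Q = Polynomial.smult (v $ (s + j)) (monom 1 j * Q)" for j
    by (simp add: smult_monom_mult)
  then show ?thesis
    unfolding vec_poly_def sum_distrib_right coeff_sum by (simp add: mult.commute)
qed

text \<open>The columns of \<open>sylvester_pderiv m n P\<close> are the coefficient vectors of \<open>z ^ j * P\<close> for
  \<open>j < m\<close> and of \<open>z ^ j * pderiv P\<close> for \<open>j < n\<close>: its kernel consists of the pairs \<open>(A, B)\<close> with
  \<open>degree A < m\<close>, \<open>degree B < n\<close> and \<open>A * P + B * pderiv P = 0\<close>.\<close>

definition sylvester_pderiv :: "nat \<Rightarrow> nat \<Rightarrow> complex poly \<Rightarrow> complex mat" where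
  "sylvester_pderiv m n P = mat (m + n) (m + n) (\<lambda>(i, j).
     if j < m then coeff (monom 1 j * P) i else coeff (monom 1 (j - m) * pderiv P) i)"

lemma sylvester_pderiv_carrier: "sylvester_pderiv m n P \<in> carrier_mat (m + n) (m + n)"
  unfolding sylvester_pderiv_def by simp

lemma sylvester_pderiv_mult_vec:
  assumes "i < m + n" "v \<in> carrier_vec (m + n)"
  shows "(sylvester_pderiv m n P *\<^sub>v v) $ i = coeff (vec_poly v 0 m * P + vec_poly v m n * pderiv P) i"
proof -
  let ?S = "sylvester_pderiv m n P"
  have "(?S *\<^sub>v v) $ i = (\<Sum>j<m + n. ?S $$ (i, j) * v $ j)"
    using assms unfolding sylvester_pderiv_def by (simp add: scalar_prod_def atLeast0LessThan)
  also have "\<dots> = (\<Sum>j<m. ?S $$ (i, j) * v $ j) + (\<Sum>j<n. ?S $$ (i, m + j) * v $ (m + j))"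
    by (rule sum_lessThan_add)
  also have "\<dots> = coeff (vec_poly v 0 m * P) i + coeff (vec_poly v m n * pderiv P) i"
    using assms(1) by (simp add: sylvester_pderiv_def coeff_vec_poly_mult)
  finally show ?thesis
    by simp
qed

lemma det_sylvester_pderiv_eq_0:
  assumes "degree A < m" "degree B < n" "A \<noteq> 0 \<or> B \<noteq> 0" "A * P + B * pderiv P = 0"
  shows "det (sylvester_pderiv m n P) = 0"
proof -
  define v where "v = vec (m + n) (\<lambda>j. if j < m then coeff A j else coeff B (j - m))"
  have v: "v \<in> carrier_vec (m + n)"
    unfolding v_def by simp
  have "vec_poly v 0 m = A" "vec_poly v m n = B"
    using assms(1,2) by (auto intro!: poly_eqI simp: coeff_vec_poly v_def coeff_eq_0)
  then have "sylvester_pderiv m n P *\<^sub>v v = 0\<^sub>v (m + n)"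
    using assms(4) by (intro eq_vecI) (simp_all add: sylvester_pderiv_mult_vec[OF _ v],
        simp add: sylvester_pderiv_def)
  moreover have "v \<noteq> 0\<^sub>v (m + n)"
  proof
    assume "v = 0\<^sub>v (m + n)"
    then have zero: "v $ j = 0" if "j < m + n" for j
      using that by simp
    have "coeff A j = 0" for j
    proof (cases "j < m")
      case True
      then show ?thesis
        using zero[of j] by (simp add: v_def)
    qed (use assms(1) in \<open>simp add: coeff_eq_0\<close>)
    moreover have "coeff B j = 0" for j
    proof (cases "j < n")
      case True
      then show ?thesis
        using zero[of "m + j"] by (simp add: v_def)
    qed (use assms(2) in \<open>simp add: coeff_eq_0\<close>)
    ultimately show False
      using assms(3) by (auto intro: poly_eqI)
  qed
  ultimately show ?thesis
    using det_0_iff_vec_prod_zero[OF sylvester_pderiv_carrier] v by blast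
qed

lemma det_sylvester_pderiv_eq_0E:
  assumes "det (sylvester_pderiv m n P) = 0" "m > 0" "n > 0" "degree P \<le> n" "degree (pderiv P) \<le> m"
  obtains A B where "degree A < m" "degree B < n" "A \<noteq> 0 \<or> B \<noteq> 0" "A * P + B * pderiv P = 0"
proof -
  obtain v where v: "v \<in> carrier_vec (m + n)" "v \<noteq> 0\<^sub>v (m + n)"
    "sylvester_pderiv m n P *\<^sub>v v = 0\<^sub>v (m + n)"
    using assms(1) det_0_iff_vec_prod_zero[OF sylvester_pderiv_carrier] by blast
  define A B where "A = vec_poly v 0 m" and "B = vec_poly v m n"
  have degrees: "degree A < m" "degree B < n"
    unfolding A_def B_def using assms(2,3) by (simp_all add: degree_vec_poly)
  have "coeff (A * P + B * pderiv P) i = 0" for i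
  proof (cases "i < m + n")
    case True
    then show ?thesis
      using v sylvester_pderiv_mult_vec[OF True v(1), of P] by (simp add: A_def B_def)
  next
    case False
    have "degree (A * P) < m + n" "degree (B * pderiv P) < m + n"
      using degrees assms(4,5) degree_mult_le[of A P] degree_mult_le[of B "pderiv P"] by linarith+
    then show ?thesis
      using False by (simp add: coeff_eq_0)
  qed
  then have "A * P + B * pderiv P = 0"
    by (simp add: poly_eqI)
  moreover have "A \<noteq> 0 \<or> B \<noteq> 0"
  proof (rule ccontr)
    assume "\<not> (A \<noteq> 0 \<or> B \<noteq> 0)"
    then have coeffs: "coeff (vec_poly v 0 m) j = 0" "coeff (vec_poly v m n) j = 0" for j
      unfolding A_def B_def by simp_all
    have "v $ j = 0" if "j < m + n" for j
    proof (cases "j < m")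
      case False
      then have "j - m < n" "m + (j - m) = j"
        using that by simp_all
      then show ?thesis
        using coeffs(2)[of "j - m"] by (simp add: coeff_vec_poly)
    qed (use coeffs(1)[of j] in \<open>simp add: coeff_vec_poly\<close>)
    then show False
      using v(1,2) by auto
  qed
  ultimately show ?thesis
    using degrees that by blast
qed

lemma det_sylvester_pderiv_nonzero_if_rsquarefree:
  assumes "2 \<le> r" "degree P = r" and sqf: "rsquarefree P"
  shows "det (sylvester_pderiv (r - 1) r P) \<noteq> 0"
proof
  assume "det (sylvester_pderiv (r - 1) r P) = 0"
  moreover have "degree (pderiv P) \<le> r - 1"
    using assms(2) by (simp add: degree_pderiv)
  ultimately obtain A B where AB: "degree B < r" "A \<noteq> 0 \<or> B \<noteq> 0" "A * P + B * pderiv P = 0"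
    using assms by (elim det_sylvester_pderiv_eq_0E) auto
  have "B = 0"
  proof (rule ccontr)
    assume "B \<noteq> 0"
    have "poly B z = 0" if "poly P z = 0" for z
      using arg_cong[OF AB(3), of "\<lambda>p. poly p z"] that sqf unfolding rsquarefree_roots by auto
    then have "card {z. poly P z = 0} \<le> card {z. poly B z = 0}"
      using poly_roots_finite[OF \<open>B \<noteq> 0\<close>] by (intro card_mono) auto
    also have "\<dots> \<le> degree B"
      using card_poly_roots_bound[OF \<open>B \<noteq> 0\<close>] .
    finally show False
      using card_roots_rsquarefree[OF sqf] assms(2) AB(1) by linarith
  qed
  moreover have "P \<noteq> 0"
    using sqf unfolding rsquarefree_def by simp
  ultimately show False
    using AB(2,3) by simp
qed

lemma rsquarefree_if_det_sylvester_pderiv_nonzero: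
  assumes "2 \<le> r" "degree P = r" and det: "det (sylvester_pderiv (r - 1) r P) \<noteq> 0"
  shows "rsquarefree P"
  unfolding rsquarefree_roots
proof (intro allI notI)
  fix z
  assume z: "poly P z = 0 \<and> poly (pderiv P) z = 0"
  then have "[:- z, 1:] dvd P" "[:- z, 1:] dvd pderiv P"
    using poly_eq_0_iff_dvd by blast+
  then obtain P1 P2 where P1: "P = [:- z, 1:] * P1" and P2: "pderiv P = [:- z, 1:] * P2"
    by (elim dvdE)
  have "degree (pderiv P) = r - 1"
    using assms(2) by (simp add: degree_pderiv)
  then have "P1 \<noteq> 0" "P2 \<noteq> 0"
    using P1 P2 assms by auto
  then have "degree ([:- z, 1:] * P1) = Suc (degree P1)" "degree ([:- z, 1:] * P2) = Suc (degree P2)"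
    by (subst degree_mult_eq; simp)+
  then have "degree P1 = r - 1" "degree P2 = r - 2"
    using P1 P2 \<open>degree (pderiv P) = r - 1\<close> assms(2) by simp_all
  moreover have "P2 * P + (- P1) * pderiv P = 0"
    by (simp only: P2) (simp add: P1 algebra_simps)
  ultimately have "det (sylvester_pderiv (r - 1) r P) = 0"
    using assms(1) \<open>P1 \<noteq> 0\<close> det_sylvester_pderiv_eq_0[of P2 "r - 1" "- P1" r P] by auto
  with det show False ..
qed

lemma polyfun_moment:
  assumes "\<And>k. k < K \<Longrightarrow> polyfun K (\<lambda>a. u a k)"
  shows "polyfun K (\<lambda>a. moment K (u a) a i)"
  unfolding moment_def by (intro polyfun_sum polyfun_mult polyfun_power polyfun_var assms) auto

lemma polyfun_det_hankel:
  assumes "\<And>k. k < K \<Longrightarrow> polyfun K (\<lambda>a. u a k)"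
  shows "polyfun K (\<lambda>a. det (hankel K (u a) a n))"
  by (rule polyfun_det[OF hankel_carrier]) (simp add: hankel_def polyfun_moment[OF assms])

lemma polyfun_orth_poly_coeff: "polyfun K (\<lambda>a. orth_poly_coeff K w r a i)"
proof -
  have adj: "polyfun K (\<lambda>a. adj_mat (hankel K w a r) $$ (i, j))" if "i < r" "j < r" for i j
    using that by (intro polyfun_adj_mat[OF hankel_carrier])
      (simp add: hankel_def polyfun_moment[OF polyfun_const])
  have "(adj_mat (hankel K w a r) *\<^sub>v vec r (\<lambda>j. moment K w a (j + r))) $ i
      = (\<Sum>j<r. adj_mat (hankel K w a r) $$ (i, j) * moment K w a (j + r))" if "i < r" for a
    using that adj_mat(1)[OF hankel_carrier[of K w a r]] by (simp add: scalar_prod_def atLeast0LessThan)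
  moreover have "polyfun K (\<lambda>a. \<Sum>j<r. adj_mat (hankel K w a r) $$ (i, j) * moment K w a (j + r))"
    if "i < r"
    using that by (intro polyfun_sum polyfun_mult adj polyfun_moment[OF polyfun_const]) auto
  moreover have "polyfun K (\<lambda>a. det (hankel K w a r))"
    by (rule polyfun_det_hankel[OF polyfun_const])
  ultimately show ?thesis
    unfolding orth_poly_coeff_def
    by (cases "i < r"; cases "i = r") (auto intro: polyfun_uminus polyfun_const)
qed

lemma polyfun_det_sylvester_pderiv:
  assumes "\<And>i. polyfun K (\<lambda>a. coeff (P a) i)"
  shows "polyfun K (\<lambda>a. det (sylvester_pderiv m n (P a)))"
proof (rule polyfun_det[OF sylvester_pderiv_carrier])
  fix i j
  assume "i < m + n" "j < m + n"
  then show "polyfun K (\<lambda>a. sylvester_pderiv m n (P a) $$ (i, j))"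
    by (cases "j < m"; cases "i < j"; cases "i < j - m")
      (auto simp: sylvester_pderiv_def coeff_monom_mult coeff_pderiv
        intro!: polyfun_mult polyfun_const assms)
qed

definition nonzero_weight_partition :: "nat set \<Rightarrow> (nat \<Rightarrow> complex) \<Rightarrow> nat \<Rightarrow> (nat \<Rightarrow> nat) \<Rightarrow> bool"
  where "nonzero_weight_partition J w n \<sigma> \<longleftrightarrow>
    (\<forall>k\<in>J. \<sigma> k < n) \<and> (\<forall>g<n. (\<Sum>k\<in>{k\<in>J. \<sigma> k = g}. w k) \<noteq> 0)"

lemma nonzero_weight_partition_card:
  assumes "finite J" "\<forall>k\<in>J. w k \<noteq> 0"
  shows "\<exists>\<sigma>. nonzero_weight_partition J w (card J) \<sigma>"
proof -
  obtain \<sigma> where \<sigma>: "bij_betw \<sigma> J {..<card J}"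
    using finite_same_card_bij[OF assms(1) finite_lessThan] by auto
  have inv: "the_inv_into J \<sigma> g \<in> J" if "g < card J" for g
    using \<sigma> that the_inv_into_into[of \<sigma> J g J] by (auto simp: bij_betw_def)
  have "{k\<in>J. \<sigma> k = g} = {the_inv_into J \<sigma> g}" if "g < card J" for g
    using \<sigma> that inv[OF that] by (auto simp: bij_betw_def the_inv_into_f_f f_the_inv_into_f)
  with inv have "nonzero_weight_partition J w (card J) \<sigma>"
    using \<sigma> assms(2) unfolding nonzero_weight_partition_def bij_betw_def by auto
  then show ?thesis
    by blast
qed

text \<open>Put \<open>x\<close> into a block whose weight stays nonzero. If there is none, all blocks weigh
  \<open>- w x\<close>: then merge blocks \<open>0\<close> and \<open>1\<close> (weight \<open>- 2 * w x\<close>) and let \<open>{x}\<close> be block \<open>1\<close>.\<close>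

lemma nonzero_weight_partition_insert:
  assumes "finite J" "x \<notin> J" "w x \<noteq> 0" "2 \<le> n" "nonzero_weight_partition J w n \<sigma>"
  shows "\<exists>\<tau>. nonzero_weight_partition (insert x J) w n \<tau>"
proof -
  define s where "s g = (\<Sum>k\<in>{k\<in>J. \<sigma> k = g}. w k)" for g
  have \<sigma>: "\<forall>k\<in>J. \<sigma> k < n" "\<forall>g<n. s g \<noteq> 0"
    using assms(5) unfolding nonzero_weight_partition_def s_def by auto
  show ?thesis
  proof (cases "\<exists>g<n. s g + w x \<noteq> 0")
    case True
    then obtain g0 where g0: "g0 < n" "s g0 + w x \<noteq> 0"
      by blast
    have "{k\<in>insert x J. (\<sigma>(x := g0)) k = g} =
        (if g = g0 then insert x {k\<in>J. \<sigma> k = g} else {k\<in>J. \<sigma> k = g})" for g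
      using assms(2) by auto
    then have "nonzero_weight_partition (insert x J) w n (\<sigma>(x := g0))"
      using \<sigma> g0 assms(1,2) unfolding nonzero_weight_partition_def s_def by (auto simp: add.commute)
    then show ?thesis
      by blast
  next
    case False
    then have s: "s g = - w x" if "g < n" for g
      using that by (simp add: eq_neg_iff_add_eq_0)
    define \<tau> where "\<tau> k = (if k = x then 1 else if \<sigma> k = 1 then 0 else \<sigma> k)" for k
    have blocks: "{k\<in>insert x J. \<tau> k = g} =
        (if g = 0 then {k\<in>J. \<sigma> k = 0} \<union> {k\<in>J. \<sigma> k = 1} else if g = 1 then {x} else {k\<in>J. \<sigma> k = g})"
      for g
      using assms(2) by (auto simp: \<tau>_def)
    have "(\<Sum>k\<in>{k\<in>insert x J. \<tau> k = g}. w k) \<noteq> 0" if "g < n" for g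
    proof -
      have "(\<Sum>k\<in>{k\<in>J. \<sigma> k = 0} \<union> {k\<in>J. \<sigma> k = 1}. w k) = s 0 + s 1"
        unfolding s_def using assms(1) by (subst sum.union_disjoint) auto
      then show ?thesis
        using that s[of 0] s[of 1] s[of g] assms(3,4) unfolding blocks s_def by auto
    qed
    moreover have "\<forall>k\<in>insert x J. \<tau> k < n"
      using \<sigma>(1) assms(4) by (auto simp: \<tau>_def)
    ultimately show ?thesis
      unfolding nonzero_weight_partition_def by blast
  qed
qed

lemma exists_nonzero_weight_partition:
  assumes "finite J" "\<forall>k\<in>J. w k \<noteq> 0" "2 \<le> n" "n \<le> card J"
  shows "\<exists>\<sigma>. nonzero_weight_partition J w n \<sigma>"
  using assms
proof (induction J rule: finite_induct)
  case (insert x J)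
  show ?case
  proof (cases "n = card (insert x J)")
    case True
    then show ?thesis
      using nonzero_weight_partition_card[of "insert x J" w] insert.hyps insert.prems by simp
  next
    case False
    then obtain \<sigma> where "nonzero_weight_partition J w n \<sigma>"
      using insert by auto
    then show ?thesis
      using nonzero_weight_partition_insert insert by auto
  qed
qed simp

lemma sum_over_partition:
  fixes w :: "nat \<Rightarrow> 'a :: semiring_0" and \<sigma> :: "nat \<Rightarrow> nat"
  assumes "finite J" "\<forall>k\<in>J. \<sigma> k < n"
  shows "(\<Sum>k\<in>J. w k * f (\<sigma> k)) = (\<Sum>g<n. (\<Sum>k\<in>{k\<in>J. \<sigma> k = g}. w k) * f g)"
proof -
  have "(\<Sum>g<n. (\<Sum>k\<in>{k\<in>J. \<sigma> k = g}. w k) * f g) = (\<Sum>g<n. \<Sum>k\<in>{k\<in>J. \<sigma> k = g}. w k * f (\<sigma> k))"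
    by (intro sum.cong refl) (simp add: sum_distrib_right)
  also have "\<dots> = (\<Sum>k\<in>J. w k * f (\<sigma> k))"
    using assms by (intro sum.group) auto
  finally show ?thesis ..
qed

text \<open>If the weighted nodes collapse to \<open>n\<close> distinct points carrying nonzero weights, the
  Hankel matrix of size \<open>n\<close> is that of these points, hence nonsingular.\<close>

lemma det_hankel_nonzero_if_clustered:
  assumes "\<And>p j. (\<Sum>k<K. u k * poly p (a k) * a k ^ j) = (\<Sum>g<n. W g * poly p (\<nu> g) * \<nu> g ^ j)"
    and "inj_on \<nu> {..<n}" "\<forall>g<n. W g \<noteq> 0"
  shows "det (hankel K u a n) \<noteq> 0"
  unfolding det_hankel_nonzero_iff
proof (intro allI impI)
  fix p :: "complex poly"
  assume "degree p < n" "orthogonal_upto K u a n p"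
  then have orth: "orthogonal_upto n W \<nu> n p"
    using assms(1) unfolding orthogonal_upto_def by simp
  have "poly p (\<nu> g) = 0" if "g < n" for g
    using orthogonal_upto_imp_zero_at_nodes[OF assms(2) order.refl orth that] assms(3) that by simp
  then show "p = 0"
    using \<open>degree p < n\<close> assms(2) by (intro poly_eqI_degree[of "\<nu> ` {..<n}"]) (auto simp: card_image)
qed

lemma exists_clustered_nodes:
  assumes "2 \<le> n" "n \<le> K" "\<forall>k<K. w k \<noteq> 0"
  shows "\<exists>a. det (hankel K w a n) \<noteq> 0 \<and> (\<forall>k<K. a k \<in> of_nat ` {..<n})"
proof -
  obtain \<sigma> where \<sigma>: "nonzero_weight_partition {..<K} w n \<sigma>"
    using exists_nonzero_weight_partition[of "{..<K}" w n] assms by auto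
  define a where "a k = (of_nat (\<sigma> k) :: complex)" for k
  have "det (hankel K w a n) \<noteq> 0"
  proof (rule det_hankel_nonzero_if_clustered)
    show "(\<Sum>k<K. w k * poly p (a k) * a k ^ j)
        = (\<Sum>g<n. (\<Sum>k\<in>{k\<in>{..<K}. \<sigma> k = g}. w k) * poly p (of_nat g) * of_nat g ^ j)" for p j
      using sum_over_partition[of "{..<K}" \<sigma> n w "\<lambda>g. poly p (of_nat g) * of_nat g ^ j"] \<sigma>
      unfolding nonzero_weight_partition_def by (simp add: a_def mult.assoc)
  qed (use \<sigma> in \<open>auto simp: nonzero_weight_partition_def inj_on_def\<close>)
  moreover have "\<forall>k<K. a k \<in> of_nat ` {..<n}"
    using \<sigma> unfolding nonzero_weight_partition_def a_def by auto
  ultimately show ?thesis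
    by blast
qed

lemma exists_det_shifted_hankel_nonzero:
  assumes "m < K" "2 \<le> r" "r \<le> K - 1" "\<forall>k<K. w k \<noteq> 0"
  shows "\<exists>a. det (hankel K (\<lambda>k. w k * (a k - a m)) a r) \<noteq> 0"
proof -
  obtain \<sigma> where \<sigma>: "nonzero_weight_partition ({..<K} - {m}) w r \<sigma>"
    using exists_nonzero_weight_partition[of "{..<K} - {m}" w r] assms by auto
  define a where "a k = (if k = m then 0 else of_nat (\<sigma> k) + 1 :: complex)" for k
  define W where "W g = (\<Sum>k\<in>{k\<in>{..<K} - {m}. \<sigma> k = g}. w k) * (of_nat g + 1)" for g
  have "det (hankel K (\<lambda>k. w k * (a k - a m)) a r) \<noteq> 0"
  proof (rule det_hankel_nonzero_if_clustered)
    fix p j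
    have "(\<Sum>k<K. w k * (a k - a m) * poly p (a k) * a k ^ j)
        = (\<Sum>k\<in>{..<K} - {m}. w k * ((of_nat (\<sigma> k) + 1) * poly p (of_nat (\<sigma> k) + 1) * (of_nat (\<sigma> k) + 1) ^ j))"
      using assms(1) by (subst sum.remove[of _ m]) (auto simp: a_def algebra_simps intro!: sum.cong)
    also have "\<dots> = (\<Sum>g<r. W g * poly p (of_nat g + 1) * (of_nat g + 1) ^ j)"
      using sum_over_partition[of "{..<K} - {m}" \<sigma> r w
          "\<lambda>g. (of_nat g + 1) * poly p (of_nat g + 1) * (of_nat g + 1) ^ j"] \<sigma>
      unfolding nonzero_weight_partition_def by (simp add: W_def algebra_simps)
    finally show "(\<Sum>k<K. w k * (a k - a m) * poly p (a k) * a k ^ j)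
        = (\<Sum>g<r. W g * poly p (of_nat g + 1) * (of_nat g + 1) ^ j)" .
  next
    have "(of_nat g + 1 :: complex) \<noteq> 0" for g
      using of_nat_neq_0[of g, where 'a = complex] by (simp add: add.commute)
    then show "\<forall>g<r. W g \<noteq> 0"
      using \<sigma> unfolding nonzero_weight_partition_def W_def by simp
  qed (auto simp: inj_on_def)
  then show ?thesis
    by blast
qed

lemma orth_poly_eq_if_nodes_roots:
  assumes "det (hankel K w a r) \<noteq> 0" "degree Q = r" "lead_coeff Q = 1" "\<forall>k<K. poly Q (a k) = 0"
  shows "orth_poly K w r a = Polynomial.smult (det (hankel K w a r)) Q"
proof -
  define D where "D = orth_poly K w r a - Polynomial.smult (det (hankel K w a r)) Q"
  have "coeff D i = 0" if "r \<le> i" for i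
    using that assms(2,3) degree_orth_poly_le[of K w r a]
    by (cases "i = r") (auto simp: D_def coeff_orth_poly orth_poly_coeff_def coeff_eq_0)
  then have "degree D < r \<or> D = 0"
    by (metis leading_coeff_0_iff not_le)
  moreover have "orthogonal_upto K w a r D"
    using orthogonal_orth_poly[of K w a r] assms(4) by (simp add: orthogonal_upto_def D_def)
  ultimately have "D = 0"
    using assms(1) det_hankel_nonzero_iff by blast
  then show ?thesis
    unfolding D_def by simp
qed

lemma exists_det_sylvester_orth_poly_nonzero:
  assumes "2 \<le> r" "r \<le> K" "\<forall>k<K. w k \<noteq> 0"
  shows "\<exists>a. det (sylvester_pderiv (r - 1) r (orth_poly K w r a)) \<noteq> 0"
proof -
  obtain a where a: "det (hankel K w a r) \<noteq> 0" "\<forall>k<K. a k \<in> of_nat ` {..<r}"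
    using exists_clustered_nodes[OF assms] by blast
  define Q where "Q = (\<Prod>g<r. [:- of_nat g, 1 :: complex:])"
  have "degree Q = r"
    unfolding Q_def by (simp add: degree_prod_linear)
  moreover have "lead_coeff Q = 1"
    unfolding Q_def by (rule lead_coeff_prod_linear)
  moreover have "\<forall>k<K. poly Q (a k) = 0"
    using a(2) unfolding Q_def by (auto simp: poly_prod_linear_eq_0_iff)
  ultimately have Q: "orth_poly K w r a = Polynomial.smult (det (hankel K w a r)) Q"
    using orth_poly_eq_if_nodes_roots[OF a(1)] by blast
  have "rsquarefree Q"
    unfolding Q_def by (rule rsquarefree_prod_linear) (auto simp: inj_on_def)
  then have "rsquarefree (orth_poly K w r a)"
    unfolding Q rsquarefree_roots using a(1) by (simp add: pderiv_smult)
  then show ?thesis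
    using det_sylvester_pderiv_nonzero_if_rsquarefree[OF assms(1) lead_coeff_orth_poly(1)[OF a(1)]]
    by blast
qed

text \<open>For \<open>d = 1\<close> the data points have to avoid the zero sets of: the Hankel determinants of
  sizes \<open>2, \<dots>, r\<close> (no orthogonal polynomial of too small degree), the determinant detecting a
  double root of the orthogonal polynomial of degree \<open>r\<close>, and the Hankel determinants of the
  weights shifted by a data point (the orthogonal polynomial does not vanish there).\<close>

definition genericity_poly_d1 :: "nat \<Rightarrow> (nat \<Rightarrow> complex) \<Rightarrow> nat \<Rightarrow> (nat \<Rightarrow> complex) \<Rightarrow> complex" where
  "genericity_poly_d1 K w r a =
     (\<Prod>n\<in>{2..r}. det (hankel K w a n)) * det (sylvester_pderiv (r - 1) r (orth_poly K w r a)) *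
     (\<Prod>m<K. det (hankel K (\<lambda>k. w k * (a k - a m)) a r))"

lemma polyfun_genericity_poly_d1_factors:
  shows "polyfun K (\<lambda>a. \<Prod>n\<in>{2..r}. det (hankel K w a n))"
    and "polyfun K (\<lambda>a. det (sylvester_pderiv (r - 1) r (orth_poly K w r a)))"
    and "polyfun K (\<lambda>a. \<Prod>m<K. det (hankel K (\<lambda>k. w k * (a k - a m)) a r))"
proof -
  show "polyfun K (\<lambda>a. \<Prod>n\<in>{2..r}. det (hankel K w a n))"
    by (intro polyfun_prod polyfun_det_hankel polyfun_const) auto
  show "polyfun K (\<lambda>a. det (sylvester_pderiv (r - 1) r (orth_poly K w r a)))"
    by (intro polyfun_det_sylvester_pderiv) (simp add: coeff_orth_poly polyfun_orth_poly_coeff)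
  show "polyfun K (\<lambda>a. \<Prod>m<K. det (hankel K (\<lambda>k. w k * (a k - a m)) a r))"
    by (intro polyfun_prod polyfun_det_hankel polyfun_mult polyfun_diff polyfun_var polyfun_const)
      auto
qed

lemma polyfun_genericity_poly_d1: "polyfun K (genericity_poly_d1 K w r)"
  unfolding genericity_poly_d1_def[abs_def] by (intro polyfun_mult polyfun_genericity_poly_d1_factors)

lemma genericity_poly_d1_not_identically_zero:
  assumes "2 \<le> r" "r \<le> K - 1" "\<forall>k<K. w k \<noteq> 0"
  shows "\<exists>a. genericity_poly_d1 K w r a \<noteq> 0"
proof -
  note factors = polyfun_genericity_poly_d1_factors[where K = K and w = w and r = r]
  have "\<exists>a. (\<Prod>n\<in>{2..r}. det (hankel K w a n)) \<noteq> 0"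
  proof (rule polyfun_prod_nonzero)
    show "\<exists>a. det (hankel K w a n) \<noteq> 0" if "n \<in> {2..r}" for n
    proof -
      have "2 \<le> n" "n \<le> K"
        using that assms(2) by auto
      then show ?thesis
        using exists_clustered_nodes[of n K w] assms(3) by blast
    qed
  qed (auto intro: polyfun_det_hankel polyfun_const)
  moreover have "\<exists>a. det (sylvester_pderiv (r - 1) r (orth_poly K w r a)) \<noteq> 0"
    using assms by (intro exists_det_sylvester_orth_poly_nonzero) auto
  ultimately obtain b where
    "(\<Prod>n\<in>{2..r}. det (hankel K w b n)) * det (sylvester_pderiv (r - 1) r (orth_poly K w r b)) \<noteq> 0"
    using polyfun_mult_nonzero[OF factors(1,2)] by blast
  moreover have "\<exists>a. (\<Prod>m<K. det (hankel K (\<lambda>k. w k * (a k - a m)) a r)) \<noteq> 0"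
  proof (rule polyfun_prod_nonzero)
    show "\<exists>a. det (hankel K (\<lambda>k. w k * (a k - a m)) a r) \<noteq> 0" if "m \<in> {..<K}" for m
      using that assms by (intro exists_det_shifted_hankel_nonzero) auto
    show "polyfun K (\<lambda>a. det (hankel K (\<lambda>k. w k * (a k - a m)) a r))" if "m \<in> {..<K}" for m
      using that by (intro polyfun_det_hankel polyfun_mult polyfun_diff polyfun_var polyfun_const) auto
  qed simp
  ultimately show ?thesis
    using polyfun_mult_nonzero[OF polyfun_mult[OF factors(1,2)] factors(3)]
    unfolding genericity_poly_d1_def by blast
qed

lemma obtain_finite_card_disjoint:
  assumes "infinite (UNIV :: 'a set)" "finite (F :: 'a set)"
  obtains T where "finite T" "card T = n" "T \<inter> F = {}"
proof -
  have "infinite (UNIV - F)"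
    using assms by (simp add: Diff_infinite_finite)
  then obtain T where "T \<subseteq> UNIV - F" "finite T" "card T = n"
    using infinite_arbitrarily_large by blast
  then show ?thesis
    using that by blast
qed

definition admissible :: "nat \<Rightarrow> (nat \<Rightarrow> complex) \<Rightarrow> (nat \<Rightarrow> complex) \<Rightarrow> nat \<Rightarrow> complex poly \<Rightarrow> bool"
  where "admissible K w a m P \<longleftrightarrow>
    lead_coeff P = 1 \<and> (\<forall>k<K. poly P (a k) \<noteq> 0) \<and> orthogonal_upto K w a m P"

lemma not_admissible_if_K_le:
  assumes "inj_on a {..<K}" "\<forall>k<K. w k \<noteq> 0" "0 < K" "K \<le> m"
  shows "\<not> admissible K w a m P"
  using orthogonal_upto_imp_zero_at_nodes[OF assms(1,4) _ assms(3)] assms(2,3)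
  unfolding admissible_def by auto

text \<open>The values \<open>1 / (w k * \<Prod>l\<noteq>k. (a k - a l))\<close> solve the dual Vandermonde system.\<close>

lemma exists_orthogonal_interpolant:
  assumes "inj_on a {..<K}" "\<forall>k<K. w k \<noteq> 0"
  shows "\<exists>R. degree R \<le> K - 1 \<and> (\<forall>k<K. poly R (a k) \<noteq> 0) \<and> orthogonal_upto K w a (K - 1) R"
proof -
  define q where "q k = (\<Prod>l\<in>{..<K} - {k}. a k - a l)" for k
  define R where "R = interpolant a {..<K} (\<lambda>k. 1 / (w k * q k))"
  have q: "q k \<noteq> 0" if "k < K" for k
    using assms(1) that by (auto simp: q_def dest: inj_onD)
  have R: "poly R (a k) = 1 / (w k * q k)" if "k < K" for k
    unfolding R_def using assms(1) that by (simp add: poly_interpolant_node)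
  have "orthogonal_upto K w a (K - 1) R"
    unfolding orthogonal_upto_def
  proof (intro allI impI)
    fix j
    assume "j < K - 1"
    then have "(\<Sum>k<K. poly (monom 1 j) (a k) / q k) = coeff (monom 1 j) (K - 1)"
      using assms(1) sum_poly_div_prod_differences[of "{..<K}" a "monom 1 j"]
      by (simp add: q_def degree_monom_eq)
    also have "\<dots> = 0"
      using \<open>j < K - 1\<close> by simp
    finally show "(\<Sum>k<K. w k * poly R (a k) * a k ^ j) = 0"
      using assms(2) by (simp add: R poly_monom)
  qed
  moreover have "degree R \<le> K - 1"
    unfolding R_def using degree_interpolant[of "{..<K}"] by simp
  ultimately show ?thesis
    using R q assms(2) by auto
qed

text \<open>A double root \<open>z\<close> of \<open>M + t R\<close> is a root of the Wronskian \<open>M R' - M' R\<close> with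
  \<open>t = - M z / R z\<close>, so all but finitely many \<open>t\<close> give a squarefree polynomial.\<close>

lemma exists_rsquarefree_perturbation:
  fixes M R :: "complex poly"
  assumes "\<forall>z. poly M z = 0 \<longrightarrow> poly R z \<noteq> 0" "M * pderiv R - pderiv M * R \<noteq> 0"
  shows "\<exists>t. t \<noteq> 0 \<and> rsquarefree (M + Polynomial.smult t R)"
proof -
  define W where "W = M * pderiv R - pderiv M * R"
  have "finite {z. poly W z = 0}"
    using assms(2) unfolding W_def by (rule poly_roots_finite)
  then have "finite ((\<lambda>z. - poly M z / poly R z) ` {z. poly W z = 0} \<union> {0})"
    by simp
  then obtain t where t: "t \<notin> (\<lambda>z. - poly M z / poly R z) ` {z. poly W z = 0} \<union> {0}"
    using ex_new_if_finite[OF infinite_UNIV_char_0] by blast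
  have "rsquarefree (M + Polynomial.smult t R)"
    unfolding rsquarefree_roots
  proof (intro allI notI)
    fix z
    assume z: "poly (M + Polynomial.smult t R) z = 0 \<and> poly (pderiv (M + Polynomial.smult t R)) z = 0"
    then have M: "poly M z = - t * poly R z" "poly (pderiv M) z = - t * poly (pderiv R) z"
      by (simp_all add: pderiv_add pderiv_smult eq_neg_iff_add_eq_0)
    then have "poly W z = 0"
      by (simp add: W_def)
    moreover have "poly R z \<noteq> 0"
      using M(1) assms(1) by auto
    moreover have "t = - poly M z / poly R z"
      using M(1) \<open>poly R z \<noteq> 0\<close> by simp
    ultimately show False
      using t by blast
  qed
  then show ?thesis
    using t by blast
qed

lemma exists_monic_rsquarefree_through:
  fixes A F :: "complex set"
  assumes "finite A" "finite F" "card A \<le> n"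
  shows "\<exists>M. degree M = n \<and> lead_coeff M = 1 \<and> rsquarefree M \<and> (\<forall>z\<in>A. poly M z = 0) \<and>
    (\<forall>z. poly M z = 0 \<longrightarrow> z \<in> A \<or> z \<notin> F)"
proof -
  have "finite (A \<union> F)"
    using assms(1,2) by simp
  then obtain T where T: "finite T" "card T = n - card A" "T \<inter> (A \<union> F) = {}"
    by (rule obtain_finite_card_disjoint[OF infinite_UNIV_char_0])
  define X where "X = A \<union> T"
  have "A \<inter> T = {}"
    using T(3) by blast
  then have "finite X" "card X = n"
    using T(1,2) assms(1,3) by (simp_all add: X_def card_Un_disjoint)
  then have "degree (\<Prod>x\<in>X. [:- x, 1:]) = n" "rsquarefree (\<Prod>x\<in>X. [:- x, 1:])"
    "poly (\<Prod>x\<in>X. [:- x, 1:]) z = 0 \<longleftrightarrow> z \<in> X" for z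
    using degree_prod_linear[of X "\<lambda>x. x"] rsquarefree_prod_linear[of X "\<lambda>x. x"]
      poly_prod_linear_eq_0_iff[of X "\<lambda>x. x"] by simp_all
  then show ?thesis
    using lead_coeff_prod_linear[of "\<lambda>x. x" X] T(3) unfolding X_def by blast
qed

lemma exists_admissible_poly_large_degree:
  assumes "inj_on a {..<K}" "\<forall>k<K. w k \<noteq> 0" "0 < K" "K \<le> I" "m \<le> K - 1"
  shows "\<exists>P. degree P = I \<and> rsquarefree P \<and> admissible K w a m P"
proof -
  obtain R where R: "degree R \<le> K - 1" "\<forall>k<K. poly R (a k) \<noteq> 0" "orthogonal_upto K w a (K - 1) R"
    using exists_orthogonal_interpolant[OF assms(1,2)] by blast
  then have "R \<noteq> 0"
    using assms(3) by auto
  then have "finite {z. poly R z = 0}"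
    by (rule poly_roots_finite)
  moreover have "card (a ` {..<K}) \<le> I"
    using assms(1,4) by (simp add: card_image)
  ultimately obtain M where M: "degree M = I" "lead_coeff M = 1" "rsquarefree M"
    "\<forall>z\<in>a ` {..<K}. poly M z = 0" "\<forall>z. poly M z = 0 \<longrightarrow> z \<in> a ` {..<K} \<or> z \<notin> {z. poly R z = 0}"
    using exists_monic_rsquarefree_through[of "a ` {..<K}"] by blast
  have "\<forall>z. poly M z = 0 \<longrightarrow> poly R z \<noteq> 0"
    using M(5) R(2) by auto
  moreover have "poly (M * pderiv R - pderiv M * R) (a 0) \<noteq> 0"
    using M(3,4) R(2) assms(3) unfolding rsquarefree_roots by simp
  then have "M * pderiv R - pderiv M * R \<noteq> 0"
    by (metis poly_0)
  ultimately obtain t where t: "t \<noteq> 0" "rsquarefree (M + Polynomial.smult t R)"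
    using exists_rsquarefree_perturbation by blast
  define P where "P = M + Polynomial.smult t R"
  have "degree R < I"
    using R(1) assms(3,4) by linarith
  then have "degree (Polynomial.smult t R) < degree M"
    using M(1) degree_smult_le[of t R] by linarith
  then have "degree P = I"
    unfolding P_def using M(1) by (simp add: degree_add_eq_left)
  moreover have "lead_coeff P = 1"
    using \<open>degree P = I\<close> \<open>degree R < I\<close> M(1,2) by (simp add: P_def coeff_eq_0)
  moreover have "(\<Sum>k<K. w k * poly P (a k) * a k ^ j) = t * (\<Sum>k<K. w k * poly R (a k) * a k ^ j)" for j
    using M(4) by (simp add: P_def sum_distrib_left algebra_simps)
  then have "orthogonal_upto K w a m P"
    using R(3) assms(5) unfolding orthogonal_upto_def by simp
  ultimately show ?thesis
    using t R(2) M(4) unfolding P_def admissible_def by auto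
qed

lemma exists_admissible_poly_by_extension:
  assumes "admissible K w a r p" "degree p = r" "rsquarefree p" "r \<le> I" "m + I \<le> 2 * r"
  shows "\<exists>P. degree P = I \<and> rsquarefree P \<and> admissible K w a m P"
proof -
  have "p \<noteq> 0"
    using assms(1) by (auto simp: admissible_def)
  then have "finite (a ` {..<K} \<union> {z. poly p z = 0})"
    by (simp add: poly_roots_finite)
  then obtain A where A: "degree A = I - r" "lead_coeff A = 1" "rsquarefree A"
    "\<forall>z. poly A z = 0 \<longrightarrow> z \<notin> a ` {..<K} \<union> {z. poly p z = 0}"
    using exists_monic_rsquarefree_through[of "{}" "a ` {..<K} \<union> {z. poly p z = 0}" "I - r"] by auto
  have "m + degree A \<le> r"
    using A(1) assms(4,5) by simp
  then have "orthogonal_upto K w a (m + degree A) p"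
    using assms(1) orthogonal_upto_mono unfolding admissible_def by blast
  then have "admissible K w a m (p * A)"
    using assms(1) A(2,4) by (auto simp: admissible_def lead_coeff_mult orthogonal_upto_mult)
  moreover have "rsquarefree (p * A)"
    using assms(3) A(3,4) by (intro rsquarefree_mult) auto
  moreover have "A \<noteq> 0"
    using A(2) by auto
  then have "degree (p * A) = I"
    using \<open>p \<noteq> 0\<close> A(1) assms(2,4) by (simp add: degree_mult_eq)
  ultimately show ?thesis
    by blast
qed

definition genericity_poly :: "nat \<Rightarrow> nat \<Rightarrow> (nat \<Rightarrow> complex) \<Rightarrow> (nat \<Rightarrow> complex) \<Rightarrow> complex" where
  "genericity_poly K d w = (if d = 1 then genericity_poly_d1 K w (Istar K 1) else (\<lambda>_. 1))"

lemma polyfun_genericity_poly: "polyfun K (genericity_poly K d w)"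
  unfolding genericity_poly_def using polyfun_genericity_poly_d1 polyfun_const by auto

lemma Istar_1_bounds:
  assumes "3 \<le> K"
  shows "2 \<le> Istar K 1" "Istar K 1 \<le> K - 1" "K \<le> 2 * Istar K 1"
  using assms unfolding Istar_def by auto

lemma genericity_poly_not_identically_zero:
  assumes "2 \<le> d * (K - 1)" "\<forall>k<K. w k \<noteq> 0"
  shows "\<exists>a. genericity_poly K d w a \<noteq> 0"
proof (cases "d = 1")
  case True
  then have "3 \<le> K"
    using assms(1) by simp
  then show ?thesis
    using genericity_poly_d1_not_identically_zero Istar_1_bounds assms(2) True by (simp add: genericity_poly_def)
qed (simp add: genericity_poly_def)

lemma exists_admissible_orth_poly:
  assumes "genericity_poly_d1 K w r a \<noteq> 0" "2 \<le> r"
  shows "\<exists>p. degree p = r \<and> rsquarefree p \<and> admissible K w a r p"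
proof -
  let ?c = "det (hankel K w a r)" and ?P = "orth_poly K w r a"
  have c: "?c \<noteq> 0"
    using assms unfolding genericity_poly_d1_def by auto
  then have P: "degree ?P = r" "lead_coeff ?P = ?c" "?P \<noteq> 0"
    using lead_coeff_orth_poly[OF c] by auto
  have "rsquarefree ?P"
    using assms(1) unfolding genericity_poly_d1_def
    by (intro rsquarefree_if_det_sylvester_pderiv_nonzero[OF assms(2) P(1)]) simp
  moreover have "poly ?P (a k) \<noteq> 0" if "k < K" for k
    using assms that orthogonal_orth_poly P(1,3)
    by (intro poly_nonzero_if_shifted_hankel) (auto simp: genericity_poly_def genericity_poly_d1_def)
  ultimately have "degree (Polynomial.smult (1 / ?c) ?P) = r"
    "rsquarefree (Polynomial.smult (1 / ?c) ?P)" "admissible K w a r (Polynomial.smult (1 / ?c) ?P)"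
    using c P orthogonal_orth_poly[of K w a r]
    by (auto simp: admissible_def rsquarefree_roots pderiv_smult orthogonal_upto_def
        sum_divide_distrib[symmetric])
  then show ?thesis
    by blast
qed

lemma exists_admissible_poly:
  assumes "inj_on a {..<K}" "\<forall>k<K. w k \<noteq> 0" "genericity_poly K d w a \<noteq> 0" "2 \<le> d * (K - 1)"
    and "Istar K d \<le> I" "I \<le> d * (K - 1)"
  shows "\<exists>P. degree P = I \<and> rsquarefree P \<and> admissible K w a (d * (K - 1) + 1 - I) P"
proof (cases "d = 1")
  case True
  then have K: "3 \<le> K"
    using assms(4) by simp
  have "genericity_poly_d1 K w (Istar K 1) a \<noteq> 0"
    using assms(3) True by (simp add: genericity_poly_def)
  then obtain p where "degree p = Istar K 1" "rsquarefree p" "admissible K w a (Istar K 1) p"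
    using exists_admissible_orth_poly[OF _ Istar_1_bounds(1)[OF K]] by blast
  then show ?thesis
    using exists_admissible_poly_by_extension Istar_1_bounds[OF K] assms(5,6) True by simp
next
  case False
  then obtain e where e: "d = Suc e" "1 \<le> e"
    using assms(4) by (cases d) auto
  then have "K - 1 \<le> e * (K - 1)" "d * (K - 1) = e * (K - 1) + (K - 1)" "Istar K d = e * (K - 1) + 1"
    by (simp_all add: Istar_def)
  then have "K \<le> I" "d * (K - 1) + 1 - I \<le> K - 1"
    using assms(5) by linarith+
  moreover have "0 < K"
    using assms(4) by (cases K) auto
  ultimately show ?thesis
    using exists_admissible_poly_large_degree[OF assms(1,2)] by blast
qed

lemma Istar_le_if_admissible:
  assumes "inj_on a {..<K}" "\<forall>k<K. w k \<noteq> 0" "genericity_poly K d w a \<noteq> 0" "2 \<le> d * (K - 1)"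
    and "degree P = I" "admissible K w a (d * (K - 1) + 1 - I) P"
  shows "Istar K d \<le> I"
proof (rule ccontr)
  assume "\<not> Istar K d \<le> I"
  then have I: "I < Istar K d" by simp
  let ?m = "d * (K - 1) + 1 - I"
  show False
  proof (cases "K \<le> ?m")
    case True
    then show False
      using not_admissible_if_K_le[OF assms(1,2)] assms(4,6) by simp
  next
    case False
    have "d = 1"
    proof (rule ccontr)
      assume "d \<noteq> 1"
      then obtain e where "d = Suc e" "1 \<le> e"
        using assms(4) by (cases d) auto
      then have "d * (K - 1) = e * (K - 1) + (K - 1)" "Istar K d = e * (K - 1) + 1"
        by (simp_all add: Istar_def)
      then show False
        using False I by linarith
    qed
    then have "0 < I" "Suc I \<le> ?m" "Suc I \<in> {2..Istar K 1}"
      using False I by (auto simp: Istar_def)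
    then have "det (hankel K w a (Suc I)) \<noteq> 0"
      using assms(3) \<open>d = 1\<close> unfolding genericity_poly_def genericity_poly_d1_def by auto
    moreover have "orthogonal_upto K w a (Suc I) P"
      using assms(6) \<open>Suc I \<le> ?m\<close> orthogonal_upto_mono unfolding admissible_def by blast
    ultimately have "P = 0"
      using assms(5) det_hankel_nonzero_iff by blast
    then show False
      using assms(6) by (simp add: admissible_def)
  qed
qed

lemma orthogonal_upto_prod_linear_iff:
  "orthogonal_upto K w a m (\<Prod>n\<in>S. [:- \<beta> n, 1:]) \<longleftrightarrow>
    (\<forall>j<m. (\<Sum>k<K. w k * (\<Prod>n\<in>S. a k - \<beta> n) * a k ^ j) = 0)"
  by (simp add: orthogonal_upto_def poly_prod)

lemma admissible_prod_linear_iff: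
  assumes "finite S"
  shows "admissible K w a m (\<Prod>n\<in>S. [:- \<beta> n, 1:]) \<longleftrightarrow>
    \<beta> ` S \<inter> a ` {..<K} = {} \<and> (\<forall>j<m. (\<Sum>k<K. w k * (\<Prod>n\<in>S. a k - \<beta> n) * a k ^ j) = 0)"
proof -
  have "(\<forall>k<K. poly (\<Prod>n\<in>S. [:- \<beta> n, 1:]) (a k) \<noteq> 0) \<longleftrightarrow> (\<forall>k<K. \<forall>n\<in>S. a k \<noteq> \<beta> n)"
    using assms by (simp add: poly_prod_linear_eq_0_iff)
  also have "\<dots> \<longleftrightarrow> \<beta> ` S \<inter> a ` {..<K} = {}"
    by (auto simp: disjoint_iff) metis
  finally show ?thesis
    by (simp add: admissible_def orthogonal_upto_prod_linear_iff lead_coeff_prod_linear)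
qed

lemma exists_roots_orthogonal_iff:
  assumes "inj_on a {..<K}" "\<forall>k<K. w k \<noteq> 0" "genericity_poly K d w a \<noteq> 0" "2 \<le> d * (K - 1)"
    and "finite S" "card S \<le> d * (K - 1)"
  shows "(\<exists>\<beta>. inj_on \<beta> S \<and> \<beta> ` S \<inter> a ` {..<K} = {} \<and>
      (\<forall>j<d * (K - 1) + 1 - card S. (\<Sum>k<K. w k * (\<Prod>n\<in>S. a k - \<beta> n) * a k ^ j) = 0))
    \<longleftrightarrow> Istar K d \<le> card S"
proof
  assume "\<exists>\<beta>. inj_on \<beta> S \<and> \<beta> ` S \<inter> a ` {..<K} = {} \<and>
      (\<forall>j<d * (K - 1) + 1 - card S. (\<Sum>k<K. w k * (\<Prod>n\<in>S. a k - \<beta> n) * a k ^ j) = 0)"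
  then obtain \<beta> where "admissible K w a (d * (K - 1) + 1 - card S) (\<Prod>n\<in>S. [:- \<beta> n, 1:])"
    using admissible_prod_linear_iff[OF assms(5)] by blast
  then show "Istar K d \<le> card S"
    using Istar_le_if_admissible[OF assms(1-4)] degree_prod_linear[OF assms(5)] by blast
next
  assume "Istar K d \<le> card S"
  then obtain P where P: "degree P = card S" "rsquarefree P"
    "admissible K w a (d * (K - 1) + 1 - card S) P"
    using exists_admissible_poly[OF assms(1-4) _ assms(6)] by blast
  then obtain \<beta> where \<beta>: "inj_on \<beta> S" "\<And>z. poly P z = (\<Prod>n\<in>S. z - \<beta> n)"
    using rsquarefree_monic_eq_prod_linear[OF assms(5)] unfolding admissible_def by metis
  then have "P = (\<Prod>n\<in>S. [:- \<beta> n, 1:])"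
    by (intro poly_ext) (simp add: poly_prod)
  then show "\<exists>\<beta>. inj_on \<beta> S \<and> \<beta> ` S \<inter> a ` {..<K} = {} \<and>
      (\<forall>j<d * (K - 1) + 1 - card S. (\<Sum>k<K. w k * (\<Prod>n\<in>S. a k - \<beta> n) * a k ^ j) = 0)"
    using P(3) \<beta>(1) admissible_prod_linear_iff[OF assms(5)] by blast
qed

lemma extend_inj_on_avoiding:
  fixes \<beta> :: "'a \<Rightarrow> 'b"
  assumes "infinite (UNIV :: 'b set)" "finite X" "S \<subseteq> X" "inj_on \<beta> S" "finite A" "\<beta> ` S \<inter> A = {}"
  obtains \<beta>' where "inj_on \<beta>' X" "\<beta>' ` X \<inter> A = {}" "\<forall>n\<in>S. \<beta>' n = \<beta> n"
proof -
  have "finite (A \<union> \<beta> ` S)"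
    using assms(2,3,5) finite_subset by blast
  then obtain T where T: "finite T" "card T = card (X - S)" "T \<inter> (A \<union> \<beta> ` S) = {}"
    by (rule obtain_finite_card_disjoint[OF assms(1)])
  then obtain \<gamma> where \<gamma>: "bij_betw \<gamma> (X - S) T"
    using finite_same_card_bij[of "X - S" T] assms(2) by auto
  define \<beta>' where "\<beta>' n = (if n \<in> S then \<beta> n else \<gamma> n)" for n
  have "inj_on \<beta>' X"
    unfolding inj_on_def
  proof (intro ballI impI)
    fix x y
    assume "x \<in> X" "y \<in> X" "\<beta>' x = \<beta>' y"
    then show "x = y"
      using assms(4) \<gamma> T(3) unfolding \<beta>'_def bij_betw_def inj_on_def
      by (auto split: if_splits)
  qed
  moreover have "\<beta>' ` X \<inter> A = {}"
    using assms(6) \<gamma> T(3) unfolding \<beta>'_def bij_betw_def by auto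
  ultimately show ?thesis
    using that by (simp add: \<beta>'_def)
qed

lemma sum_weighted_eq_if_dvd:
  assumes "orthogonal_upto K w a m P" "P dvd f - g" "degree (f - g) < m + degree P"
  shows "(\<Sum>k<K. w k * poly f (a k)) = (\<Sum>k<K. w k * poly g (a k))"
proof (cases "f = g")
  case False
  obtain H where H: "f - g = P * H"
    using assms(2) by (rule dvdE)
  moreover have "P \<noteq> 0" "H \<noteq> 0"
    using False H by auto
  ultimately have "degree H < m"
    using assms(3) by (simp add: degree_mult_eq)
  then have orth: "(\<Sum>k<K. w k * poly P (a k) * poly H (a k)) = 0"
    by (rule orthogonal_upto_poly[OF assms(1)])
  have "poly f z - poly g z = poly P z * poly H z" for z
    using arg_cong[OF H, of "\<lambda>p. poly p z"] by simp
  then have "w k * poly f (a k) - w k * poly g (a k) = w k * poly P (a k) * poly H (a k)" for k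
    by (simp add: right_diff_distrib[symmetric] mult.assoc)
  then have "(\<Sum>k<K. w k * poly f (a k)) - (\<Sum>k<K. w k * poly g (a k)) = 0"
    using orth by (simp add: sum_subtractf[symmetric])
  then show ?thesis
    by simp
qed simp

lemma cpa_output_eq_target:
  assumes "inj_on \<alpha> {..<K}" "finite Ns" "inj_on \<beta> Ns" "card Ns \<le> d * (K - 1)" "degree F = d"
    and "orthogonal_upto K w \<alpha> (d * (K - 1) + 1 - card Ns) (\<Prod>n\<in>Ns. [:- \<beta> n, 1:])"
  shows "cpa_output K w \<alpha> \<beta> F X Ns e = target K w F X e"
proof -
  define E where "E = interpolant \<alpha> {..<K} (\<lambda>k. X k e)"
  define f where "f = F \<circ>\<^sub>p E"
  define D where "D = interpolant \<beta> Ns (\<lambda>n. poly f (\<beta> n))"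
  have encoder: "encoder K \<alpha> X z e = poly E z" for z
    unfolding encoder_def E_def by (simp add: poly_interpolant)
  have decoder: "decoder K \<alpha> \<beta> F X Ns z e = poly D z" for z
    unfolding decoder_def D_def f_def using assms(2) by (simp add: poly_interpolant encoder poly_pcompose)
  have "degree E \<le> K - 1"
    unfolding E_def using degree_interpolant[of "{..<K}" \<alpha>] by simp
  then have "degree f \<le> d * (K - 1)"
    unfolding f_def degree_pcompose assms(5) by (rule mult_le_mono2)
  moreover have "degree D \<le> card Ns - 1"
    unfolding D_def by (rule degree_interpolant[OF assms(2)])
  then have "degree D \<le> d * (K - 1)"
    using assms(4) by linarith
  ultimately have "degree (f - D) \<le> d * (K - 1)"
    by (rule degree_diff_le)
  then have "degree (f - D) < d * (K - 1) + 1 - card Ns + card Ns"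
    using assms(4) by linarith
  moreover have "(\<Prod>n\<in>Ns. [:- \<beta> n, 1:]) dvd f - D"
    using assms(2,3) by (intro prod_linear_dvd) (auto simp: D_def poly_interpolant_node)
  ultimately have "(\<Sum>k<K. w k * poly f (\<alpha> k)) = (\<Sum>k<K. w k * poly D (\<alpha> k))"
    using sum_weighted_eq_if_dvd[OF assms(6)] assms(2) by (simp add: degree_prod_linear)
  then show ?thesis
    using assms(1)
    by (simp add: cpa_output_def target_def decoder f_def E_def poly_pcompose poly_interpolant_node)
qed

lemma pattern_inter_subset: "nonstraggler_pattern N S G Ns \<Longrightarrow> g < G \<Longrightarrow> pattern_inter G Ns \<subseteq> Ns g"
  unfolding pattern_inter_def by auto

lemma finite_pattern_set: "nonstraggler_pattern N S G Ns \<Longrightarrow> g < G \<Longrightarrow> finite (Ns g)"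
  unfolding nonstraggler_pattern_def by (meson finite_lessThan finite_subset)

lemma finite_pattern_inter: "nonstraggler_pattern N S G Ns \<Longrightarrow> finite (pattern_inter G Ns)"
  using pattern_inter_subset[of N S G Ns 0] finite_pattern_set[of N S G Ns 0] finite_subset
  unfolding nonstraggler_pattern_def by auto

lemma card_pattern_inter_le: "nonstraggler_pattern N S G Ns \<Longrightarrow> card (pattern_inter G Ns) \<le> N - S"
  using pattern_inter_subset[of N S G Ns 0] finite_pattern_set[of N S G Ns 0] card_mono
  unfolding nonstraggler_pattern_def by fastforce

lemma orthogonal_upto_prod_linear_superset:
  assumes "finite B" "A \<subseteq> B" "\<forall>n\<in>A. \<beta>' n = \<beta> n"
    and "orthogonal_upto K w a (m + card (B - A)) (\<Prod>n\<in>A. [:- \<beta> n, 1:])"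
  shows "orthogonal_upto K w a m (\<Prod>n\<in>B. [:- \<beta>' n, 1:])"
proof -
  have "(\<Prod>n\<in>B. [:- \<beta>' n, 1:]) = (\<Prod>n\<in>A. [:- \<beta> n, 1:]) * (\<Prod>n\<in>B - A. [:- \<beta>' n, 1:])"
    using prod.subset_diff[OF assms(2,1), of "\<lambda>n. [:- \<beta>' n, 1:]"] assms(3) by (simp add: mult.commute)
  moreover have "degree (\<Prod>n\<in>B - A. [:- \<beta>' n, 1:]) = card (B - A)"
    using assms(1) by (simp add: degree_prod_linear)
  ultimately show ?thesis
    using orthogonal_upto_mult assms(4) by metis
qed

lemma feasible_extension:
  assumes "inj_on \<alpha> {..<K}" "nonstraggler_pattern N S G Ns" "S \<le> N" "N \<le> d * (K - 1) + S"
    and "inj_on \<beta> (pattern_inter G Ns)" "\<beta> ` pattern_inter G Ns \<inter> \<alpha> ` {..<K} = {}"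
    and "orthogonal_upto K w \<alpha> (d * (K - 1) + 1 - card (pattern_inter G Ns))
      (\<Prod>n\<in>pattern_inter G Ns. [:- \<beta> n, 1:])"
  obtains \<beta>' where "inj_on \<beta>' {..<N}" "\<beta>' ` {..<N} \<inter> \<alpha> ` {..<K} = {}"
    "\<And>g. g < G \<Longrightarrow> orthogonal_upto K w \<alpha> (d * (K - 1) + S + 1 - N) (\<Prod>n\<in>Ns g. [:- \<beta>' n, 1:])"
    "cpa_feasible K d w \<alpha> \<beta>' G Ns"
proof -
  let ?I = "pattern_inter G Ns"
  have G: "0 < G" "\<And>g. g < G \<Longrightarrow> Ns g \<subseteq> {..<N} \<and> card (Ns g) = N - S"
    using assms(2) unfolding nonstraggler_pattern_def by auto
  have "?I \<subseteq> {..<N}"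
    using pattern_inter_subset[OF assms(2) G(1)] G(2)[OF G(1)] by auto
  then obtain \<beta>' where \<beta>': "inj_on \<beta>' {..<N}" "\<beta>' ` {..<N} \<inter> \<alpha> ` {..<K} = {}" "\<forall>n\<in>?I. \<beta>' n = \<beta> n"
    using extend_inj_on_avoiding[OF infinite_UNIV_char_0 _ _ assms(5) _ assms(6)] by blast
  have orth: "orthogonal_upto K w \<alpha> (d * (K - 1) + S + 1 - N) (\<Prod>n\<in>Ns g. [:- \<beta>' n, 1:])"
    if "g < G" for g
  proof (rule orthogonal_upto_prod_linear_superset[where A = ?I and \<beta> = \<beta>])
    show "finite (Ns g)" "?I \<subseteq> Ns g"
      using finite_pattern_set[OF assms(2) that] pattern_inter_subset[OF assms(2) that] .
    then have "d * (K - 1) + S + 1 - N + card (Ns g - ?I) = d * (K - 1) + 1 - card ?I"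
      using card_mono[of "Ns g" ?I] assms(3,4) G(2)[OF that] by (simp add: card_Diff_subset finite_subset)
    then show "orthogonal_upto K w \<alpha> (d * (K - 1) + S + 1 - N + card (Ns g - ?I)) (\<Prod>n\<in>?I. [:- \<beta> n, 1:])"
      using assms(7) by simp
  qed (use \<beta>'(3) in simp)
  have "cpa_feasible K d w \<alpha> \<beta>' G Ns"
    unfolding cpa_feasible_def
  proof (intro allI impI)
    fix F :: "complex poly" and X :: "nat \<Rightarrow> nat \<times> nat \<Rightarrow> complex" and g e
    assume "degree F = d" "g < G"
    moreover have "d * (K - 1) + 1 - card (Ns g) = d * (K - 1) + S + 1 - N"
      using G(2)[OF \<open>g < G\<close>] assms(3,4) by simp
    ultimately show "cpa_output K w \<alpha> \<beta>' F X (Ns g) e = target K w F X e"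
      using assms(1,4) finite_pattern_set[OF assms(2)] G(2) orth \<beta>'(1)
      by (intro cpa_output_eq_target) (auto intro: inj_on_subset)
  qed
  then show ?thesis
    using that \<beta>'(1,2) orth by blast
qed

lemma pattern_points_characterization:
  assumes "S + 2 \<le> N" "N \<le> d * (K - 1) + S" "\<forall>k<K. w k \<noteq> 0"
    and \<alpha>: "inj_on \<alpha> {..<K}" "genericity_poly K d w \<alpha> \<noteq> 0" and Ns: "nonstraggler_pattern N S G Ns"
  shows "let C = d * (K - 1) + S + 1 - N; \<I> = pattern_inter G Ns; I = card \<I>; L = N - S - I in
    ((\<exists>\<beta>. inj_on \<beta> \<I> \<and> \<beta> ` \<I> \<inter> \<alpha> ` {..<K} = {} \<and>
        (\<forall>j < C + L. (\<Sum>k<K. w k * (\<Prod>n\<in>\<I>. \<alpha> k - \<beta> n) * \<alpha> k ^ j) = 0)) \<longleftrightarrow> I \<ge> Istar K d) \<and>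
    (I \<ge> Istar K d \<longrightarrow>
      (\<exists>\<beta>. inj_on \<beta> {..<N} \<and> \<beta> ` {..<N} \<inter> \<alpha> ` {..<K} = {} \<and>
        (\<forall>g<G. \<forall>j<C. (\<Sum>k<K. w k * (\<Prod>n\<in>Ns g. \<alpha> k - \<beta> n) * \<alpha> k ^ j) = 0) \<and>
        cpa_feasible K d w \<alpha> \<beta> G Ns))"
proof -
  let ?I = "pattern_inter G Ns"
  have dK: "2 \<le> d * (K - 1)"
    using assms(1,2) by linarith
  have "card ?I \<le> N - S"
    by (rule card_pattern_inter_le[OF Ns])
  then have C_L: "d * (K - 1) + S + 1 - N + (N - S - card ?I) = d * (K - 1) + 1 - card ?I"
    and "card ?I \<le> d * (K - 1)"
    using assms(1,2) by linarith+
  then have part1: "(\<exists>\<beta>. inj_on \<beta> ?I \<and> \<beta> ` ?I \<inter> \<alpha> ` {..<K} = {} \<and>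
      (\<forall>j<d * (K - 1) + 1 - card ?I. (\<Sum>k<K. w k * (\<Prod>n\<in>?I. \<alpha> k - \<beta> n) * \<alpha> k ^ j) = 0))
    \<longleftrightarrow> Istar K d \<le> card ?I"
    using exists_roots_orthogonal_iff[OF \<alpha>(1) assms(3) \<alpha>(2) dK finite_pattern_inter[OF Ns]]
    by simp
  have part2: "\<exists>\<beta>'. inj_on \<beta>' {..<N} \<and> \<beta>' ` {..<N} \<inter> \<alpha> ` {..<K} = {} \<and>
        (\<forall>g<G. \<forall>j<d * (K - 1) + S + 1 - N. (\<Sum>k<K. w k * (\<Prod>n\<in>Ns g. \<alpha> k - \<beta>' n) * \<alpha> k ^ j) = 0) \<and>
        cpa_feasible K d w \<alpha> \<beta>' G Ns"
    if le: "Istar K d \<le> card ?I"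
  proof -
    obtain \<beta> where \<beta>: "inj_on \<beta> ?I" "\<beta> ` ?I \<inter> \<alpha> ` {..<K} = {}"
      "orthogonal_upto K w \<alpha> (d * (K - 1) + 1 - card ?I) (\<Prod>n\<in>?I. [:- \<beta> n, 1:])"
      using part1 le unfolding orthogonal_upto_prod_linear_iff by blast
    have "S \<le> N"
      using assms(1) by simp
    obtain \<beta>' where "inj_on \<beta>' {..<N}" "\<beta>' ` {..<N} \<inter> \<alpha> ` {..<K} = {}"
      "\<And>g. g < G \<Longrightarrow> orthogonal_upto K w \<alpha> (d * (K - 1) + S + 1 - N) (\<Prod>n\<in>Ns g. [:- \<beta>' n, 1:])"
      "cpa_feasible K d w \<alpha> \<beta>' G Ns"
      using feasible_extension[OF \<alpha>(1) Ns \<open>S \<le> N\<close> assms(2) \<beta>] by blast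
    then show ?thesis
      unfolding orthogonal_upto_prod_linear_iff by blast
  qed
  show ?thesis
    unfolding Let_def C_L
  proof (intro conjI impI)
    show "(\<exists>\<beta>. inj_on \<beta> ?I \<and> \<beta> ` ?I \<inter> \<alpha> ` {..<K} = {} \<and>
        (\<forall>j<d * (K - 1) + 1 - card ?I. (\<Sum>k<K. w k * (\<Prod>n\<in>?I. \<alpha> k - \<beta> n) * \<alpha> k ^ j) = 0))
      \<longleftrightarrow> Istar K d \<le> card ?I"
      by (fact part1)
  qed (rule part2)
qed

theorem theorem2:
  fixes K d S N :: nat and w :: "nat \<Rightarrow> complex"
  assumes "K > 0" "d > 0" "S > 0" "N > 0"
    and "S + 2 \<le> N" "N \<le> d * (K - 1) + S"
    and "\<forall>k<K. w k \<noteq> 0"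
  shows "\<exists>D c. mpoly_nonzero K D c \<and>
    (\<forall>(\<alpha> :: nat \<Rightarrow> complex) G Ns.
       inj_on \<alpha> {..<K} \<and> mpoly_eval K D c \<alpha> \<noteq> 0 \<and> nonstraggler_pattern N S G Ns \<longrightarrow>
       (let C = d * (K - 1) + S + 1 - N;
            \<I> = pattern_inter G Ns;
            I = card \<I>;
            L = N - S - I
        in
         ((\<exists>\<beta> :: nat \<Rightarrow> complex. inj_on \<beta> \<I> \<and> \<beta> ` \<I> \<inter> \<alpha> ` {..<K} = {} \<and>
             (\<forall>j < C + L. (\<Sum>k<K. w k * (\<Prod>n\<in>\<I>. \<alpha> k - \<beta> n) * \<alpha> k ^ j) = 0))
          \<longleftrightarrow> I \<ge> Istar K d)
         \<and>
         (I \<ge> Istar K d \<longrightarrow>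
            (\<exists>\<beta> :: nat \<Rightarrow> complex. inj_on \<beta> {..<N} \<and> \<beta> ` {..<N} \<inter> \<alpha> ` {..<K} = {} \<and>
               (\<forall>g<G. \<forall>j<C. (\<Sum>k<K. w k * (\<Prod>n\<in>Ns g. \<alpha> k - \<beta> n) * \<alpha> k ^ j) = 0) \<and>
               cpa_feasible K d w \<alpha> \<beta> G Ns))))"
proof -
  have dK: "2 \<le> d * (K - 1)"
    using assms(5,6) by linarith
  obtain D c where Dc: "genericity_poly K d w = mpoly_eval K D c"
    using polyfun_imp_mpoly_eval[OF polyfun_genericity_poly] by blast
  have "mpoly_nonzero K D c"
    using genericity_poly_not_identically_zero[OF dK assms(7)] mpoly_nonzero_if_eval_nonzero Dc by metis
  then show ?thesis
    using pattern_points_characterization[OF assms(5-7), unfolded Dc] by blast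
qed

end
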